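(* Let $\mathsf{L}$ be a coherent normal modal logic for which $\mathcal{V}_\mathsf{L}$ is countably canonical. Then for any stable term $t(x,\bar{u})$ in which $x$ occurs only positively, there exists $n\in\mathbb{N}$ such that $\vdash_\mathsf{L} t_+^n(x,\bar{u})\leftrightarrow t_+^{n+1}(x,\bar{u})$, where $t_+(x,\bar{u}) := x\vee t(x,\bar{u})$.
   Context: $\mathcal{V}_\mathsf{L}$ denotes the variety of modal algebras corresponding to $\mathsf{L}$; $\mathsf{L}$ is coherent if $\mathcal{V}_\mathsf{L}$ is coherent (every finitely generated subalgebra of a finitely presented member is finitely presented). $\mathcal{V}_\mathsf{L}$ is countably canonical if the canonical extension $\mathbf{A}^\sigma$ of every countable $\mathbf{A}\in\mathcal{V}_\mathsf{L}$ belongs to $\mathcal{V}_\mathsf{L}$. In a canonical extension $\mathbf{A}^\sigma$ of a Boolean algebra with operators, the basic operations are interpreted as the canonical extensions of the operations of $\mathbf{A}$; a term $t$ is stable if for every such algebra $\mathbf{A}$, the canonical extension $(t^{\mathbf{A}})^\sigma$ of the term function coincides with the term function $t^{\mathbf{A}^\sigma}$. Iterates: $s^0(x,\bar{u}):=x$, $s^{k+1}(x,\bar{u}):=s(s^k(x,\bar{u}),\bar{u})$. *)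

theory Defs
  imports Main
begin

datatype form = Var nat | Bot | Neg form | And form form | Or form form | Box form

definition Imp :: "form \<Rightarrow> form \<Rightarrow> form" where
  "Imp p q = Or (Neg p) q"

definition Iff :: "form \<Rightarrow> form \<Rightarrow> form" where
  "Iff p q = And (Imp p q) (Imp q p)"

fun vars :: "form \<Rightarrow> nat set" where
  "vars (Var n) = {n}"
| "vars Bot = {}"
| "vars (Neg p) = vars p"
| "vars (And p q) = vars p \<union> vars q"
| "vars (Or p q) = vars p \<union> vars q"
| "vars (Box p) = vars p"

fun subst :: "(nat \<Rightarrow> form) \<Rightarrow> form \<Rightarrow> form" where
  "subst \<sigma> (Var n) = \<sigma> n"
| "subst \<sigma> Bot = Bot"
| "subst \<sigma> (Neg p) = Neg (subst \<sigma> p)"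
| "subst \<sigma> (And p q) = And (subst \<sigma> p) (subst \<sigma> q)"
| "subst \<sigma> (Or p q) = Or (subst \<sigma> p) (subst \<sigma> q)"
| "subst \<sigma> (Box p) = Box (subst \<sigma> p)"

definition subst1 :: "nat \<Rightarrow> form \<Rightarrow> form \<Rightarrow> form" where
  "subst1 x s t = subst (\<lambda>i. if i = x then s else Var i) t"

definition tplus :: "nat \<Rightarrow> form \<Rightarrow> form" where
  "tplus x t = Or (Var x) t"

fun iter :: "nat \<Rightarrow> form \<Rightarrow> nat \<Rightarrow> form" where
  "iter x s 0 = Var x"
| "iter x s (Suc k) = subst1 x (iter x s k) s"

fun pos_only :: "nat \<Rightarrow> form \<Rightarrow> bool" and neg_only :: "nat \<Rightarrow> form \<Rightarrow> bool" where
  "pos_only x (Var n) = True"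
| "pos_only x Bot = True"
| "pos_only x (Neg p) = neg_only x p"
| "pos_only x (And p q) = (pos_only x p \<and> pos_only x q)"
| "pos_only x (Or p q) = (pos_only x p \<and> pos_only x q)"
| "pos_only x (Box p) = pos_only x p"
| "neg_only x (Var n) = (n \<noteq> x)"
| "neg_only x Bot = True"
| "neg_only x (Neg p) = pos_only x p"
| "neg_only x (And p q) = (neg_only x p \<and> neg_only x q)"
| "neg_only x (Or p q) = (neg_only x p \<and> neg_only x q)"
| "neg_only x (Box p) = neg_only x p"

fun box_free :: "form \<Rightarrow> bool" where
  "box_free (Var n) = True"
| "box_free Bot = True"
| "box_free (Neg p) = box_free p"
| "box_free (And p q) = (box_free p \<and> box_free q)"
| "box_free (Or p q) = (box_free p \<and> box_free q)"
| "box_free (Box p) = False"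

fun peval :: "(nat \<Rightarrow> bool) \<Rightarrow> form \<Rightarrow> bool" where
  "peval v (Var n) = v n"
| "peval v Bot = False"
| "peval v (Neg p) = (\<not> peval v p)"
| "peval v (And p q) = (peval v p \<and> peval v q)"
| "peval v (Or p q) = (peval v p \<or> peval v q)"
| "peval v (Box p) = False"

definition taut :: "form \<Rightarrow> bool" where
  "taut p \<longleftrightarrow> box_free p \<and> (\<forall>v. peval v p)"

definition normal_logic :: "form set \<Rightarrow> bool" where
  "normal_logic L \<longleftrightarrow>
     (\<forall>p \<sigma>. taut p \<longrightarrow> subst \<sigma> p \<in> L) \<and>
     Imp (Box (Imp (Var 0) (Var 1))) (Imp (Box (Var 0)) (Box (Var 1))) \<in> L \<and>
     (\<forall>p q. p \<in> L \<longrightarrow> Imp p q \<in> L \<longrightarrow> q \<in> L) \<and>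
     (\<forall>p. p \<in> L \<longrightarrow> Box p \<in> L) \<and>
     (\<forall>p \<sigma>. p \<in> L \<longrightarrow> subst \<sigma> p \<in> L)"

record 'a malg =
  mcar :: "'a set"
  mjoin :: "'a \<Rightarrow> 'a \<Rightarrow> 'a"
  mmeet :: "'a \<Rightarrow> 'a \<Rightarrow> 'a"
  mcompl :: "'a \<Rightarrow> 'a"
  mbot :: 'a
  mtop :: 'a
  mbox :: "'a \<Rightarrow> 'a"

definition modal_algebra :: "'a malg \<Rightarrow> bool" where
  "modal_algebra A \<longleftrightarrow>
    (let C = mcar A; j = mjoin A; m = mmeet A; c = mcompl A in
     mbot A \<in> C \<and> mtop A \<in> C \<and>
     (\<forall>a\<in>C. \<forall>b\<in>C. j a b \<in> C \<and> m a b \<in> C) \<and> (\<forall>a\<in>C. c a \<in> C \<and> mbox A a \<in> C) \<and>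
     (\<forall>a\<in>C. \<forall>b\<in>C. j a b = j b a \<and> m a b = m b a) \<and>
     (\<forall>a\<in>C. \<forall>b\<in>C. \<forall>d\<in>C. j a (j b d) = j (j a b) d \<and> m a (m b d) = m (m a b) d) \<and>
     (\<forall>a\<in>C. \<forall>b\<in>C. j a (m a b) = a \<and> m a (j a b) = a) \<and>
     (\<forall>a\<in>C. \<forall>b\<in>C. \<forall>d\<in>C. m a (j b d) = j (m a b) (m a d)) \<and>
     (\<forall>a\<in>C. j a (c a) = mtop A \<and> m a (c a) = mbot A) \<and>
     mbox A (mtop A) = mtop A \<and>
     (\<forall>a\<in>C. \<forall>b\<in>C. mbox A (m a b) = m (mbox A a) (mbox A b)))"

fun eval :: "'a malg \<Rightarrow> (nat \<Rightarrow> 'a) \<Rightarrow> form \<Rightarrow> 'a" where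
  "eval A v (Var n) = v n"
| "eval A v Bot = mbot A"
| "eval A v (Neg p) = mcompl A (eval A v p)"
| "eval A v (And p q) = mmeet A (eval A v p) (eval A v q)"
| "eval A v (Or p q) = mjoin A (eval A v p) (eval A v q)"
| "eval A v (Box p) = mbox A (eval A v p)"

definition assign :: "'a malg \<Rightarrow> (nat \<Rightarrow> 'a) \<Rightarrow> bool" where
  "assign A v \<longleftrightarrow> (\<forall>i. v i \<in> mcar A)"

definition in_VL :: "form set \<Rightarrow> 'a malg \<Rightarrow> bool" where
  "in_VL L A \<longleftrightarrow> modal_algebra A \<and>
     (\<forall>p\<in>L. \<forall>v. assign A v \<longrightarrow> eval A v p = mtop A)"

text \<open>A is finitely presented in V_L iff A is isomorphic to F_{V_L}(n)/theta(E) for some n and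
  finite set of equations E in n variables; equivalently: A has generators a_0..a_{n-1}
  satisfying E, and every equation in n variables satisfied by the generators is a consequence
  of E in V_L.  (Consequence is checked in countable members of V_L, represented on nat.)\<close>
definition fin_pres :: "form set \<Rightarrow> 'a malg \<Rightarrow> bool" where
  "fin_pres L A \<longleftrightarrow> in_VL L A \<and>
    (\<exists>n a E. assign A a \<and> finite E \<and>
       (\<forall>(s,t)\<in>E. vars s \<subseteq> {..<n} \<and> vars t \<subseteq> {..<n}) \<and>
       mcar A = {eval A a p | p. vars p \<subseteq> {..<n}} \<and>
       (\<forall>(s,t)\<in>E. eval A a s = eval A a t) \<and>
       (\<forall>p q. vars p \<subseteq> {..<n} \<longrightarrow> vars q \<subseteq> {..<n} \<longrightarrow> eval A a p = eval A a q \<longrightarrow>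
          (\<forall>(B :: nat malg) b. in_VL L B \<longrightarrow> assign B b \<longrightarrow>
              (\<forall>(s,t)\<in>E. eval B b s = eval B b t) \<longrightarrow> eval B b p = eval B b q)))"

definition gen :: "'a malg \<Rightarrow> 'a set \<Rightarrow> 'a set" where
  "gen A G = {eval A v p | v p. \<forall>i. v i \<in> insert (mbot A) G}"

text \<open>V_L coherent: every finitely generated subalgebra of a finitely presented member
  (countable, so represented on nat) is finitely presented.\<close>
definition coherent :: "form set \<Rightarrow> bool" where
  "coherent L \<longleftrightarrow>
    (\<forall>(A :: nat malg) G. fin_pres L A \<longrightarrow> finite G \<longrightarrow> G \<subseteq> mcar A \<longrightarrow>
        fin_pres L (A\<lparr>mcar := gen A G\<rparr>))"

definition ultrafilter :: "'a malg \<Rightarrow> 'a set \<Rightarrow> bool" where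
  "ultrafilter A U \<longleftrightarrow> U \<subseteq> mcar A \<and> mtop A \<in> U \<and> mbot A \<notin> U \<and>
     (\<forall>a\<in>U. \<forall>b\<in>U. mmeet A a b \<in> U) \<and>
     (\<forall>a\<in>U. \<forall>b\<in>mcar A. mmeet A a b = a \<longrightarrow> b \<in> U) \<and>
     (\<forall>a\<in>mcar A. a \<in> U \<or> mcompl A a \<in> U)"

definition Uf :: "'a malg \<Rightarrow> 'a set set" where
  "Uf A = {U. ultrafilter A U}"

definition emb :: "'a malg \<Rightarrow> 'a \<Rightarrow> 'a set set" where
  "emb A a = {U \<in> Uf A. a \<in> U}"

definition closed_el :: "'a malg \<Rightarrow> 'a set set \<Rightarrow> bool" where
  "closed_el A k \<longleftrightarrow> (\<exists>S \<subseteq> mcar A. k = Uf A \<inter> \<Inter> (emb A ` S))"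

definition open_el :: "'a malg \<Rightarrow> 'a set set \<Rightarrow> bool" where
  "open_el A o' \<longleftrightarrow> (\<exists>S \<subseteq> mcar A. o' = \<Union> (emb A ` S))"

text \<open>sigma-extension (Gehrke-Jonsson) of a map f : A^V \<rightarrow> A, where V is the (finite) set of
  variables f depends on; arguments are assignments.\<close>
definition sigma_ext :: "'a malg \<Rightarrow> nat set \<Rightarrow> ((nat \<Rightarrow> 'a) \<Rightarrow> 'a) \<Rightarrow>
    (nat \<Rightarrow> 'a set set) \<Rightarrow> 'a set set" where
  "sigma_ext A V f x = \<Union> { Uf A \<inter> \<Inter> { emb A (f a) | a. assign A a \<and>
                               (\<forall>i\<in>V. k i \<subseteq> emb A (a i) \<and> emb A (a i) \<subseteq> o' i) }
                          | k o'. \<forall>i\<in>V. closed_el A (k i) \<and> open_el A (o' i) \<and>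
                                      k i \<subseteq> x i \<and> x i \<subseteq> o' i }"

definition canext :: "'a malg \<Rightarrow> 'a set set malg" where
  "canext A = \<lparr> mcar = Pow (Uf A), mjoin = (\<union>), mmeet = (\<inter>),
               mcompl = (\<lambda>X. Uf A - X), mbot = {}, mtop = Uf A,
               mbox = (\<lambda>X. sigma_ext A {0} (\<lambda>a. mbox A (a 0)) (\<lambda>_. X)) \<rparr>"

text \<open>V_L countably canonical (countable algebras represented on nat).\<close>
definition countably_canonical :: "form set \<Rightarrow> bool" where
  "countably_canonical L \<longleftrightarrow> (\<forall>A :: nat malg. in_VL L A \<longrightarrow> in_VL L (canext A))"

text \<open>Stable term: canonical extension of the term function equals the term function of the
  canonical extension (checked over modal algebras on nat, i.e. countable ones).\<close>
definition stable :: "form \<Rightarrow> bool" where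
  "stable t \<longleftrightarrow> (\<forall>A :: nat malg. modal_algebra A \<longrightarrow>
     (\<forall>x. assign (canext A) x \<longrightarrow>
        sigma_ext A (vars t) (\<lambda>a. eval A a t) x = eval (canext A) x t))"

end

theory Submission
  imports Defs "HOL-Library.Countable"
begin

(* Write I k for the iterates t_+^k(x), an increasing chain, and let w, y be fresh variables.
   Let delta be the hypothesis  w <= y, x <= ~y, t(~y) <= ~y.  Since t is monotone in x, every
   I k lies below ~y, hence delta derives w & I k <-> False for all k.
   Compactness: a y-free consequence of delta already follows from finitely many hypotheses
   ~(w & I k).  Indeed, in the canonical extension of the Lindenbaum algebra of all these
   hypotheses, the open element U = \/_k I k is mapped into itself by t (compactness, plus
   stability to compute t on U), so interpreting ~y as U satisfies delta; by countable
   canonicity the consequence holds there, hence in the Lindenbaum algebra.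
   Coherence makes the y-free subalgebra of the algebra presented by delta finitely presented,
   so a single K serves all y-free consequences, in particular w & I (K+1) <-> False.
   Substituting ~ I K for w turns the hypotheses ~(w & I k), k <= K, into theorems and yields
   I (K+1) -> I K. *)

instance form :: countable by countable_datatype

lemma subst_Imp [simp]: "subst \<sigma> (Imp p q) = Imp (subst \<sigma> p) (subst \<sigma> q)"
  by (simp add: Imp_def)

lemma subst_Iff [simp]: "subst \<sigma> (Iff p q) = Iff (subst \<sigma> p) (subst \<sigma> q)"
  by (simp add: Iff_def)

lemma vars_Imp [simp]: "vars (Imp p q) = vars p \<union> vars q"
  by (simp add: Imp_def)

lemma vars_Iff [simp]: "vars (Iff p q) = vars p \<union> vars q"
  by (auto simp add: Iff_def)

lemma finite_vars: "finite (vars p)"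
  by (induct p) auto

lemma vars_subst: "vars (subst \<sigma> p) = (\<Union>i\<in>vars p. vars (\<sigma> i))"
  by (induct p) auto

lemma subst_Var: "subst Var p = p"
  by (induct p) auto

lemma subst_cong: "(\<And>i. i \<in> vars p \<Longrightarrow> \<sigma> i = \<tau> i) \<Longrightarrow> subst \<sigma> p = subst \<tau> p"
  by (induct p) auto

lemma subst_subst: "subst \<sigma> (subst \<tau> p) = subst (\<lambda>i. subst \<sigma> (\<tau> i)) p"
  by (induct p) auto

lemma subst1_simps [simp]:
  "subst1 x p (Var n) = (if n = x then p else Var n)"
  "subst1 x p Bot = Bot"
  "subst1 x p (Neg s) = Neg (subst1 x p s)"
  "subst1 x p (And s s') = And (subst1 x p s) (subst1 x p s')"
  "subst1 x p (Or s s') = Or (subst1 x p s) (subst1 x p s')"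
  "subst1 x p (Box s) = Box (subst1 x p s)"
  by (simp_all add: subst1_def)

lemma vars_subst1: "vars (subst1 x p s) \<subseteq> vars p \<union> vars s"
  unfolding subst1_def vars_subst by (auto split: if_splits)

lemma finite_subset_Un_range_bound:
  fixes f :: "nat \<Rightarrow> 'a"
  assumes "finite A" and "A \<subseteq> S \<union> range f"
  shows "\<exists>n. A \<subseteq> S \<union> f ` {..n}"
proof -
  obtain C where "finite C" "A - S = f ` C"
    using finite_subset_image[of "A - S" f UNIV] assms by blast
  moreover obtain n where "\<forall>k\<in>C. k \<le> n"
    using calculation(1) finite_nat_set_iff_bounded_le by blast
  ultimately show ?thesis by blast
qed

fun Conjs :: "form list \<Rightarrow> form" where
  "Conjs [] = Neg Bot"
| "Conjs (p # ps) = And p (Conjs ps)"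

lemma subst_Conjs: "subst \<sigma> (Conjs ps) = Conjs (map (subst \<sigma>) ps)"
  by (induct ps) auto

fun Boxes :: "nat \<Rightarrow> form \<Rightarrow> form" where
  "Boxes 0 p = p"
| "Boxes (Suc n) p = Box (Boxes n p)"

lemma subst_Boxes: "subst \<sigma> (Boxes n p) = Boxes n (subst \<sigma> p)"
  by (induct n) auto

definition boxed :: "form set \<Rightarrow> form set" where
  "boxed G = {Boxes n g | n g. g \<in> G}"

text \<open>Classical truth of a modal formula when its variables and boxed subformulas are
  treated as independent atoms; tautologies in this sense are substitution instances of
  box-free tautologies.\<close>

fun pval :: "(form \<Rightarrow> bool) \<Rightarrow> form \<Rightarrow> bool" where
  "pval V (Var n) = V (Var n)"
| "pval V Bot = False"
| "pval V (Neg p) = (\<not> pval V p)"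
| "pval V (And p q) = (pval V p \<and> pval V q)"
| "pval V (Or p q) = (pval V p \<or> pval V q)"
| "pval V (Box p) = V (Box p)"

lemma pval_Imp [simp]: "pval V (Imp p q) = (pval V p \<longrightarrow> pval V q)"
  by (simp add: Imp_def)

lemma pval_Iff [simp]: "pval V (Iff p q) = (pval V p \<longleftrightarrow> pval V q)"
  by (auto simp add: Iff_def)

lemma pval_Conjs [simp]: "pval V (Conjs ps) = (\<forall>p\<in>set ps. pval V p)"
  by (induct ps) auto

fun skeleton :: "form \<Rightarrow> form" where
  "skeleton (Var n) = Var (to_nat (Var n))"
| "skeleton Bot = Bot"
| "skeleton (Neg p) = Neg (skeleton p)"
| "skeleton (And p q) = And (skeleton p) (skeleton q)"
| "skeleton (Or p q) = Or (skeleton p) (skeleton q)"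
| "skeleton (Box p) = Var (to_nat (Box p))"

lemma box_free_skeleton: "box_free (skeleton p)"
  by (induct p) auto

lemma subst_skeleton: "subst from_nat (skeleton p) = p"
  by (induct p) auto

lemma peval_skeleton: "peval v (skeleton p) = pval (\<lambda>a. v (to_nat a)) p"
  by (induct p) auto

section \<open>Normal modal logics and global consequence\<close>

locale normal_modal_logic =
  fixes L :: "form set"
  assumes normal: "normal_logic L"
begin

lemma mp: "p \<in> L \<Longrightarrow> Imp p q \<in> L \<Longrightarrow> q \<in> L"
  using normal unfolding normal_logic_def by blast

lemma nec: "p \<in> L \<Longrightarrow> Box p \<in> L"
  using normal unfolding normal_logic_def by blast

lemma subst_mem: "p \<in> L \<Longrightarrow> subst \<sigma> p \<in> L"
  using normal unfolding normal_logic_def by blast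

lemma pval_valid_mem:
  assumes "\<And>V. pval V p"
  shows "p \<in> L"
proof -
  have "taut (skeleton p)"
    unfolding taut_def using box_free_skeleton assms by (simp add: peval_skeleton)
  then have "subst from_nat (skeleton p) \<in> L"
    using normal unfolding normal_logic_def by blast
  then show ?thesis by (simp add: subst_skeleton)
qed

lemma mem_by_pval:
  "set ps \<subseteq> L \<Longrightarrow> (\<And>V. \<forall>p\<in>set ps. pval V p \<Longrightarrow> pval V q) \<Longrightarrow> q \<in> L"
proof (induct ps arbitrary: q)
  case Nil
  then show ?case by (intro pval_valid_mem) simp
next
  case (Cons p ps)
  have "Imp p q \<in> L"
  proof (rule Cons.hyps)
    show "set ps \<subseteq> L" using Cons.prems(1) by simp
    fix V assume "\<forall>p'\<in>set ps. pval V p'"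
    then show "pval V (Imp p q)" using Cons.prems(2)[of V] by simp
  qed
  moreover have "p \<in> L" using Cons.prems(1) by simp
  ultimately show ?case by (rule mp[rotated])
qed

lemma mem_by_pval1: "p \<in> L \<Longrightarrow> (\<And>V. pval V p \<Longrightarrow> pval V q) \<Longrightarrow> q \<in> L"
  by (rule mem_by_pval[of "[p]"]) auto

lemma mem_by_pval2:
  "p \<in> L \<Longrightarrow> p' \<in> L \<Longrightarrow> (\<And>V. pval V p \<Longrightarrow> pval V p' \<Longrightarrow> pval V q) \<Longrightarrow> q \<in> L"
  by (rule mem_by_pval[of "[p, p']"]) auto

lemma K_mem: "Imp (Box (Imp p q)) (Imp (Box p) (Box q)) \<in> L"
proof -
  have "Imp (Box (Imp (Var 0) (Var 1))) (Imp (Box (Var 0)) (Box (Var 1))) \<in> L"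
    using normal unfolding normal_logic_def by blast
  from subst_mem[OF this, of "\<lambda>i. if i = 0 then p else q"] show ?thesis by simp
qed

lemma Box_mono_mem: "Imp p q \<in> L \<Longrightarrow> Imp (Box p) (Box q) \<in> L"
  by (rule mem_by_pval2[OF nec K_mem]) auto

lemma Box_And_mem: "Imp (And (Box p) (Box q)) (Box (And p q)) \<in> L"
proof -
  have "Imp (Box p) (Box (Imp q (And p q))) \<in> L"
    by (intro Box_mono_mem pval_valid_mem) auto
  then show ?thesis by (rule mem_by_pval2[OF _ K_mem]) auto
qed

lemma Box_Conjs_mem: "Imp (Conjs (map Box ps)) (Box (Conjs ps)) \<in> L"
proof (induct ps)
  case Nil
  have "Box (Neg Bot) \<in> L" by (intro nec pval_valid_mem) auto
  then show ?case by (rule mem_by_pval1) auto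
next
  case (Cons p ps)
  show ?case by (rule mem_by_pval2[OF Cons Box_And_mem[of p "Conjs ps"]]) auto
qed

lemma Boxes_mem: "p \<in> L \<Longrightarrow> Boxes n p \<in> L"
  by (induct n) (auto intro: nec)

text \<open>Global consequence: p follows in L from the hypotheses G, which may be used under any
  number of boxes.\<close>

definition derives :: "form set \<Rightarrow> form \<Rightarrow> bool" where
  "derives G p \<longleftrightarrow> (\<exists>ps. set ps \<subseteq> boxed G \<and> Imp (Conjs ps) p \<in> L)"

lemma derives_mem: "p \<in> L \<Longrightarrow> derives G p"
  unfolding derives_def by (intro exI[of _ "[]"]) (auto elim: mem_by_pval1)

lemma derives_hyp: "g \<in> G \<Longrightarrow> derives G g"
  unfolding derives_def boxed_def
  by (intro exI[of _ "[g]"]) (auto intro!: exI[of _ 0] pval_valid_mem)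

lemma derives_mono: "G \<subseteq> G' \<Longrightarrow> derives G p \<Longrightarrow> derives G' p"
  unfolding derives_def boxed_def by blast

lemma derives_Conjs: "\<forall>p\<in>set ps. derives G p \<Longrightarrow> derives G (Conjs ps)"
proof (induct ps)
  case Nil
  then show ?case by (intro derives_mem pval_valid_mem) simp
next
  case (Cons p ps)
  then obtain qs1 qs2 where
    "set qs1 \<subseteq> boxed G" "Imp (Conjs qs1) p \<in> L"
    "set qs2 \<subseteq> boxed G" "Imp (Conjs qs2) (Conjs ps) \<in> L"
    unfolding derives_def by auto
  moreover have "Imp (Conjs (qs1 @ qs2)) (Conjs (p # ps)) \<in> L"
    by (rule mem_by_pval2[OF calculation(2,4)]) auto
  ultimately show ?case unfolding derives_def by (intro exI[of _ "qs1 @ qs2"]) auto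
qed

lemma derives_by_pval:
  assumes "\<forall>p\<in>set ps. derives G p" and "\<And>V. \<forall>p\<in>set ps. pval V p \<Longrightarrow> pval V q"
  shows "derives G q"
proof -
  obtain qs where "set qs \<subseteq> boxed G" "Imp (Conjs qs) (Conjs ps) \<in> L"
    using derives_Conjs[OF assms(1)] unfolding derives_def by auto
  moreover have "Imp (Conjs qs) q \<in> L"
    by (rule mem_by_pval1[OF calculation(2)]) (use assms(2) in auto)
  ultimately show ?thesis unfolding derives_def by auto
qed

lemma derives_by_pval0: "(\<And>V. pval V q) \<Longrightarrow> derives G q"
  by (rule derives_by_pval[of "[]"]) auto

lemma derives_by_pval1: "derives G p \<Longrightarrow> (\<And>V. pval V p \<Longrightarrow> pval V q) \<Longrightarrow> derives G q"
  by (rule derives_by_pval[of "[p]"]) auto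

lemma derives_by_pval2:
  "derives G p \<Longrightarrow> derives G p' \<Longrightarrow> (\<And>V. pval V p \<Longrightarrow> pval V p' \<Longrightarrow> pval V q) \<Longrightarrow> derives G q"
  by (rule derives_by_pval[of "[p, p']"]) auto

lemma derives_by_pval3:
  "derives G p \<Longrightarrow> derives G p' \<Longrightarrow> derives G p'' \<Longrightarrow>
    (\<And>V. pval V p \<Longrightarrow> pval V p' \<Longrightarrow> pval V p'' \<Longrightarrow> pval V q) \<Longrightarrow> derives G q"
  by (rule derives_by_pval[of "[p, p', p'']"]) auto

lemma derives_Box:
  assumes "derives G p"
  shows "derives G (Box p)"
proof -
  obtain ps where ps: "set ps \<subseteq> boxed G" "Imp (Conjs ps) p \<in> L"
    using assms unfolding derives_def by auto
  have "Box q \<in> boxed G" if q: "q \<in> boxed G" for q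
  proof -
    obtain n g where "q = Boxes n g" "g \<in> G" using q unfolding boxed_def by blast
    then have "Box q = Boxes (Suc n) g \<and> g \<in> G" by simp
    then show ?thesis unfolding boxed_def by blast
  qed
  then have "set (map Box ps) \<subseteq> boxed G"
    using ps(1) by auto
  moreover have "Imp (Conjs (map Box ps)) (Box p) \<in> L"
    by (rule mem_by_pval2[OF Box_Conjs_mem Box_mono_mem[OF ps(2)]]) auto
  ultimately show ?thesis unfolding derives_def by blast
qed

lemma derives_Imp_Box: "derives G (Imp p q) \<Longrightarrow> derives G (Imp (Box p) (Box q))"
  by (rule derives_by_pval2[OF derives_Box derives_mem[OF K_mem]]) auto

lemma derives_Imp_Neg: "derives G (Imp p q) \<Longrightarrow> derives G (Imp (Neg q) (Neg p))"
  by (erule derives_by_pval1) auto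

lemma derives_Imp_And:
  "derives G (Imp p q) \<Longrightarrow> derives G (Imp p' q') \<Longrightarrow> derives G (Imp (And p p') (And q q'))"
  by (erule derives_by_pval2) auto

lemma derives_Imp_Or:
  "derives G (Imp p q) \<Longrightarrow> derives G (Imp p' q') \<Longrightarrow> derives G (Imp (Or p p') (Or q q'))"
  by (erule derives_by_pval2) auto

lemma derives_subst_mem:
  assumes "derives G p" and "\<forall>g\<in>G. subst \<sigma> g \<in> L"
  shows "subst \<sigma> p \<in> L"
proof -
  obtain ps where ps: "set ps \<subseteq> boxed G" "Imp (Conjs ps) p \<in> L"
    using assms(1) unfolding derives_def by auto
  have "\<forall>q\<in>set ps. subst \<sigma> q \<in> L"
    using ps(1) assms(2) unfolding boxed_def by (auto simp: subst_Boxes Boxes_mem)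
  then have "subst \<sigma> (Conjs ps) \<in> L"
    unfolding subst_Conjs by (intro mem_by_pval[of "map (subst \<sigma>) ps"]) auto
  moreover have "Imp (subst \<sigma> (Conjs ps)) (subst \<sigma> p) \<in> L"
    using subst_mem[OF ps(2)] by simp
  ultimately show ?thesis using mp by blast
qed

lemma derives_finite_hyps:
  assumes "derives G p"
  shows "\<exists>G0. finite G0 \<and> G0 \<subseteq> G \<and> derives G0 p"
proof -
  obtain ps where ps: "set ps \<subseteq> boxed G" "Imp (Conjs ps) p \<in> L"
    using assms unfolding derives_def by auto
  then have "\<forall>q\<in>set ps. \<exists>ng. snd ng \<in> G \<and> q = Boxes (fst ng) (snd ng)"
    unfolding boxed_def by fastforce
  then obtain f where f: "\<forall>q\<in>set ps. snd (f q) \<in> G \<and> q = Boxes (fst (f q)) (snd (f q))"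
    by metis
  have "set ps \<subseteq> boxed (snd ` f ` set ps)"
    unfolding boxed_def using f by blast
  then show ?thesis
    using f ps(2) unfolding derives_def by (intro exI[of _ "snd ` f ` set ps"]) blast
qed

lemma derives_subst1_mono:
  "(pos_only x t \<longrightarrow> derives G (Imp p q) \<longrightarrow> derives G (Imp (subst1 x p t) (subst1 x q t))) \<and>
   (neg_only x t \<longrightarrow> derives G (Imp p q) \<longrightarrow> derives G (Imp (subst1 x q t) (subst1 x p t)))"
  by (induct t)
    (auto intro: derives_by_pval0 derives_Imp_Neg derives_Imp_And derives_Imp_Or derives_Imp_Box)

end

lemma eval_subst: "eval M v (subst \<sigma> p) = eval M (\<lambda>i. eval M v (\<sigma> i)) p"
  by (induct p) auto

lemma eval_cong: "(\<And>i. i \<in> vars p \<Longrightarrow> v i = v' i) \<Longrightarrow> eval M v p = eval M v' p"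
  by (induct p) auto

lemma eval_carrier_update: "eval (M\<lparr>mcar := X\<rparr>) v p = eval M v p"
  by (induct p) auto

context
  fixes M :: "'a malg"
  assumes malg: "modal_algebra M"
begin

lemma malg_closed:
  "mbot M \<in> mcar M" "mtop M \<in> mcar M"
  "a \<in> mcar M \<Longrightarrow> b \<in> mcar M \<Longrightarrow> mjoin M a b \<in> mcar M"
  "a \<in> mcar M \<Longrightarrow> b \<in> mcar M \<Longrightarrow> mmeet M a b \<in> mcar M"
  "a \<in> mcar M \<Longrightarrow> mcompl M a \<in> mcar M"
  "a \<in> mcar M \<Longrightarrow> mbox M a \<in> mcar M"
  using malg unfolding modal_algebra_def Let_def by blast+

lemma malg_commute:
  "a \<in> mcar M \<Longrightarrow> b \<in> mcar M \<Longrightarrow> mjoin M a b = mjoin M b a"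
  "a \<in> mcar M \<Longrightarrow> b \<in> mcar M \<Longrightarrow> mmeet M a b = mmeet M b a"
  using malg unfolding modal_algebra_def Let_def by blast+

lemma malg_absorb:
  "a \<in> mcar M \<Longrightarrow> b \<in> mcar M \<Longrightarrow> mjoin M a (mmeet M a b) = a"
  "a \<in> mcar M \<Longrightarrow> b \<in> mcar M \<Longrightarrow> mmeet M a (mjoin M a b) = a"
  using malg unfolding modal_algebra_def Let_def by blast+

lemma malg_distrib:
  "a \<in> mcar M \<Longrightarrow> b \<in> mcar M \<Longrightarrow> d \<in> mcar M \<Longrightarrow>
    mmeet M a (mjoin M b d) = mjoin M (mmeet M a b) (mmeet M a d)"
  using malg unfolding modal_algebra_def Let_def by blast

lemma malg_join_assoc:
  "a \<in> mcar M \<Longrightarrow> b \<in> mcar M \<Longrightarrow> d \<in> mcar M \<Longrightarrow>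
    mjoin M a (mjoin M b d) = mjoin M (mjoin M a b) d"
  using malg unfolding modal_algebra_def Let_def by blast

lemma malg_compl:
  "a \<in> mcar M \<Longrightarrow> mjoin M a (mcompl M a) = mtop M"
  "a \<in> mcar M \<Longrightarrow> mmeet M a (mcompl M a) = mbot M"
  using malg unfolding modal_algebra_def Let_def by blast+

lemma malg_box_top: "mbox M (mtop M) = mtop M"
  using malg unfolding modal_algebra_def Let_def by blast

lemma malg_meet_top: "a \<in> mcar M \<Longrightarrow> mmeet M a (mtop M) = a"
  using malg_absorb(2)[of a "mcompl M a"] malg_closed(5) malg_compl(1) by simp

lemma malg_join_bot: "a \<in> mcar M \<Longrightarrow> mjoin M a (mbot M) = a"
  using malg_absorb(1)[of a "mcompl M a"] malg_closed(5) malg_compl(2) by simp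

lemma malg_join_top: "a \<in> mcar M \<Longrightarrow> mjoin M a (mtop M) = mtop M"
proof -
  assume a: "a \<in> mcar M"
  have idem: "mjoin M a a = a"
    using malg_absorb(1)[OF a, of "mjoin M a a"] malg_absorb(2)[OF a a] malg_closed(3)[OF a a]
    by simp
  have "mjoin M a (mtop M) = mjoin M a (mjoin M a (mcompl M a))"
    using malg_compl(1)[OF a] by simp
  also have "\<dots> = mjoin M (mjoin M a a) (mcompl M a)"
    using malg_join_assoc[OF a a malg_closed(5)[OF a]] .
  finally show ?thesis using idem malg_compl(1)[OF a] by simp
qed

lemma malg_compl_top: "mcompl M (mtop M) = mbot M"
  using malg_compl(2)[of "mtop M"] malg_commute(2)[of "mtop M" "mcompl M (mtop M)"]
    malg_meet_top[of "mcompl M (mtop M)"] malg_closed(2,5)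
  by simp

lemma malg_compl_bot: "mcompl M (mbot M) = mtop M"
  using malg_compl(1)[of "mbot M"] malg_commute(1)[of "mbot M" "mcompl M (mbot M)"]
    malg_join_bot[of "mcompl M (mbot M)"] malg_closed(1,5)
  by simp

lemma malg_le_if_Imp_top:
  assumes a: "a \<in> mcar M" and b: "b \<in> mcar M" and top: "mjoin M (mcompl M a) b = mtop M"
  shows "mmeet M a b = a"
proof -
  have "a = mmeet M a (mjoin M (mcompl M a) b)" using top malg_meet_top[OF a] by simp
  also have "\<dots> = mjoin M (mmeet M a (mcompl M a)) (mmeet M a b)"
    using malg_distrib malg_closed(5) a b by simp
  also have "\<dots> = mmeet M a b"
    using malg_compl(2)[OF a] malg_join_bot[of "mmeet M a b"] malg_closed(1) malg_closed(4)[OF a b]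
      malg_commute(1)[of "mbot M" "mmeet M a b"]
    by simp
  finally show ?thesis by simp
qed

lemma malg_eq_if_Iff_top:
  assumes a: "a \<in> mcar M" and b: "b \<in> mcar M"
    and top: "mmeet M (mjoin M (mcompl M a) b) (mjoin M (mcompl M b) a) = mtop M"
  shows "a = b"
proof -
  have eq_top: "c = mtop M" if "c \<in> mcar M" "d \<in> mcar M" "mmeet M c d = mtop M" for c d
    using malg_absorb(1)[of c d] malg_join_top that by simp
  have c: "mjoin M (mcompl M a) b \<in> mcar M" "mjoin M (mcompl M b) a \<in> mcar M"
    using malg_closed(3,5) a b by simp_all
  have ab: "mjoin M (mcompl M a) b = mtop M"
    using eq_top[OF c top] .
  have ba: "mjoin M (mcompl M b) a = mtop M"
    using eq_top[OF c(2) c(1)] top malg_commute(2)[OF c] by simp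
  show ?thesis
    using malg_le_if_Imp_top[OF a b ab] malg_le_if_Imp_top[OF b a ba] malg_commute(2)[OF a b]
    by simp
qed

lemma eval_closed: "assign M v \<Longrightarrow> eval M v p \<in> mcar M"
  by (induct p) (auto simp: assign_def intro: malg_closed)

lemma eval_Conjs_top: "\<forall>p\<in>set ps. eval M v p = mtop M \<Longrightarrow> eval M v (Conjs ps) = mtop M"
  by (induct ps) (auto simp: malg_compl_bot malg_meet_top malg_closed(2))

lemma eval_Boxes_top: "eval M v p = mtop M \<Longrightarrow> eval M v (Boxes n p) = mtop M"
  by (induct n) (auto simp: malg_box_top)

lemma eval_Imp_Iff_top:
  assumes v: "assign M v"
    and "eval M v (Imp h (Iff p q)) = mtop M" and "eval M v h = mtop M"
  shows "eval M v p = eval M v q"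
proof -
  have "mjoin M (mbot M) (eval M v (Iff p q)) = mtop M"
    using assms(2,3) malg_compl_top by (simp add: Imp_def)
  then have "eval M v (Iff p q) = mtop M"
    using malg_join_bot malg_commute(1) malg_closed(1) eval_closed[OF v] by metis
  then show ?thesis
    using malg_eq_if_Iff_top eval_closed[OF v] by (simp add: Iff_def Imp_def)
qed

end

lemma (in normal_modal_logic) derives_sound:
  assumes M: "in_VL L M" and v: "assign M v"
    and hyps: "\<forall>g\<in>G. eval M v g = mtop M" and "derives G (Iff p q)"
  shows "eval M v p = eval M v q"
proof -
  have malg: "modal_algebra M" using M unfolding in_VL_def by blast
  obtain ps where ps: "set ps \<subseteq> boxed G" "Imp (Conjs ps) (Iff p q) \<in> L"
    using assms(4) unfolding derives_def by blast
  have "\<forall>h\<in>set ps. eval M v h = mtop M"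
    using ps(1) hyps eval_Boxes_top[OF malg] unfolding boxed_def by blast
  then have "eval M v (Conjs ps) = mtop M" using eval_Conjs_top[OF malg] by blast
  moreover have "eval M v (Imp (Conjs ps) (Iff p q)) = mtop M"
    using M ps(2) v unfolding in_VL_def by blast
  ultimately show ?thesis using eval_Imp_Iff_top[OF malg v] by blast
qed

section \<open>Lindenbaum-Tarski algebras\<close>

text \<open>An equivalence class is encoded by the code
  (under to_nat) of its representative with the least code, so that the algebra lives on nat; the
  carrier consists of the classes of formulas in the variables below N.\<close>

locale lindenbaum = normal_modal_logic +
  fixes N :: nat and G :: "form set"
begin

definition eqv :: "form \<Rightarrow> form \<Rightarrow> bool" where
  "eqv p q \<longleftrightarrow> derives G (Iff p q)"

lemma eqv_by_pval: "(\<And>V. pval V p = pval V q) \<Longrightarrow> eqv p q"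
  unfolding eqv_def by (rule derives_by_pval0) simp

lemma eqv_refl: "eqv p p"
  by (rule eqv_by_pval) simp

lemma eqv_sym: "eqv p q \<Longrightarrow> eqv q p"
  unfolding eqv_def by (erule derives_by_pval1) auto

lemma eqv_trans: "eqv p q \<Longrightarrow> eqv q r \<Longrightarrow> eqv p r"
  unfolding eqv_def by (erule derives_by_pval2) auto

lemma eqv_Neg: "eqv p q \<Longrightarrow> eqv (Neg p) (Neg q)"
  unfolding eqv_def by (erule derives_by_pval1) auto

lemma eqv_And: "eqv p q \<Longrightarrow> eqv p' q' \<Longrightarrow> eqv (And p p') (And q q')"
  unfolding eqv_def by (erule derives_by_pval2) auto

lemma eqv_Or: "eqv p q \<Longrightarrow> eqv p' q' \<Longrightarrow> eqv (Or p p') (Or q q')"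
  unfolding eqv_def by (erule derives_by_pval2) auto

lemma eqv_Box: "eqv p q \<Longrightarrow> eqv (Box p) (Box q)"
proof -
  assume "eqv p q"
  then have "derives G (Imp p q)" "derives G (Imp q p)"
    unfolding eqv_def by (auto elim: derives_by_pval1)
  then have "derives G (Imp (Box p) (Box q))" "derives G (Imp (Box q) (Box p))"
    by (auto intro: derives_Imp_Box)
  then show ?thesis
    unfolding eqv_def by (rule derives_by_pval2) auto
qed

lemma eqv_subst: "(\<And>i. i \<in> vars p \<Longrightarrow> eqv (\<sigma> i) (\<tau> i)) \<Longrightarrow> eqv (subst \<sigma> p) (subst \<tau> p)"
  by (induct p) (auto intro: eqv_refl eqv_Neg eqv_And eqv_Or eqv_Box)

lemma eqv_subst_Var:
  assumes "\<And>i. i \<in> vars p \<Longrightarrow> derives G (Iff (\<sigma> i) (Var i))"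
  shows "eqv (subst \<sigma> p) p"
  using eqv_subst[of p \<sigma> Var] assms subst_Var unfolding eqv_def by simp

definition rep :: "form \<Rightarrow> form" where
  "rep p = from_nat (LEAST n. eqv p (from_nat n))"

definition cls :: "form \<Rightarrow> nat" where
  "cls p = to_nat (rep p)"

lemma rep_eqv: "eqv p (rep p)"
  unfolding rep_def by (rule LeastI[of _ "to_nat p"]) (simp add: eqv_refl)

lemma eqv_rep: "eqv (rep p) p"
  by (rule eqv_sym, rule rep_eqv)

lemma derives_Iff_rep: "derives G (Iff (rep p) p)"
  using eqv_rep unfolding eqv_def .

lemma rep_cong: "eqv p q \<Longrightarrow> rep p = rep q"
proof -
  assume "eqv p q"
  then have "(\<lambda>n. eqv p (from_nat n)) = (\<lambda>n. eqv q (from_nat n))"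
    by (auto intro: eqv_trans eqv_sym)
  then show ?thesis unfolding rep_def by simp
qed

lemma cls_eq: "cls p = cls q \<longleftrightarrow> eqv p q"
proof
  assume "cls p = cls q"
  then have "rep p = rep q" unfolding cls_def by simp
  then show "eqv p q" using rep_eqv[of p] eqv_rep[of q] eqv_trans by metis
next
  assume "eqv p q"
  then show "cls p = cls q" unfolding cls_def using rep_cong by simp
qed

lemma eqv_cls: "eqv p q \<Longrightarrow> cls p = cls q"
  using cls_eq by blast

lemma from_nat_cls [simp]: "from_nat (cls p) = rep p"
  unfolding cls_def by simp

lemma cls_rep [simp]: "cls (rep p) = cls p"
  by (rule eqv_cls, rule eqv_rep)

definition LA :: "nat malg" where
  "LA = \<lparr> mcar = {cls p | p. vars p \<subseteq> {..<N}},
          mjoin = (\<lambda>a b. cls (Or (from_nat a) (from_nat b))),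
          mmeet = (\<lambda>a b. cls (And (from_nat a) (from_nat b))),
          mcompl = (\<lambda>a. cls (Neg (from_nat a))),
          mbot = cls Bot, mtop = cls (Neg Bot),
          mbox = (\<lambda>a. cls (Box (from_nat a))) \<rparr>"

lemma LA_car: "mcar LA = {cls p | p. vars p \<subseteq> {..<N}}"
  unfolding LA_def by simp

lemma LA_ops:
  "mmeet LA a b = cls (And (from_nat a) (from_nat b))"
  "mjoin LA a b = cls (Or (from_nat a) (from_nat b))"
  "mcompl LA a = cls (Neg (from_nat a))"
  "mbox LA a = cls (Box (from_nat a))"
  by (simp_all add: LA_def)

lemma LA_cls_simps [simp]:
  "mjoin LA (cls p) (cls q) = cls (Or p q)"
  "mmeet LA (cls p) (cls q) = cls (And p q)"
  "mcompl LA (cls p) = cls (Neg p)"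
  "mbox LA (cls p) = cls (Box p)"
  "mbot LA = cls Bot"
  "mtop LA = cls (Neg Bot)"
  unfolding LA_def
  by (simp_all, (rule eqv_cls, (intro eqv_Neg eqv_And eqv_Or eqv_Box eqv_rep))+)

lemma cls_from_nat: "a \<in> mcar LA \<Longrightarrow> cls (from_nat a) = a"
  by (auto simp: LA_car)

lemma cls_in_LA: "vars p \<subseteq> {..<N} \<Longrightarrow> cls p \<in> mcar LA"
  by (auto simp: LA_car)

lemma ball_LA: "(\<And>p. vars p \<subseteq> {..<N} \<Longrightarrow> P (cls p)) \<Longrightarrow> \<forall>a\<in>mcar LA. P a"
  by (auto simp: LA_car)

lemma eval_LA: "assign LA v \<Longrightarrow> eval LA v p = cls (subst (\<lambda>i. from_nat (v i)) p)"
proof (induct p)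
  case (Var n)
  then have "v n \<in> mcar LA" unfolding assign_def by blast
  then show ?case by (simp add: cls_from_nat)
qed (simp_all only: eval.simps subst.simps LA_cls_simps)

lemma eval_LA_cls:
  assumes "\<forall>i. vars (\<sigma> i) \<subseteq> {..<N}"
  shows "eval LA (\<lambda>i. cls (\<sigma> i)) p = cls (subst \<sigma> p)"
proof -
  have "assign LA (\<lambda>i. cls (\<sigma> i))"
    using assms unfolding assign_def by (auto intro: cls_in_LA)
  then have "eval LA (\<lambda>i. cls (\<sigma> i)) p = cls (subst (\<lambda>i. rep (\<sigma> i)) p)"
    by (simp add: eval_LA)
  also have "\<dots> = cls (subst \<sigma> p)"
    by (rule eqv_cls, rule eqv_subst) (simp add: eqv_rep)
  finally show ?thesis .
qed

lemma modal_LA: "modal_algebra LA"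
proof -
  have Box_top: "cls (Box (Neg Bot)) = cls (Neg Bot)"
  proof (rule eqv_cls)
    have "Box (Neg Bot) \<in> L" by (intro nec pval_valid_mem) simp
    then show "eqv (Box (Neg Bot)) (Neg Bot)"
      unfolding eqv_def by (rule derives_by_pval1[OF derives_mem]) simp
  qed
  have Box_And: "cls (Box (And p q)) = cls (And (Box p) (Box q))" for p q
  proof (rule eqv_cls)
    have h: "Imp (Box (And p q)) (Box p) \<in> L" "Imp (Box (And p q)) (Box q) \<in> L"
      by (rule Box_mono_mem, rule pval_valid_mem, simp)+
    show "eqv (Box (And p q)) (And (Box p) (Box q))"
      unfolding eqv_def
      by (rule derives_by_pval3[OF derives_mem[OF h(1)] derives_mem[OF h(2)] derives_mem[OF Box_And_mem]])
        (unfold pval_Imp pval_Iff pval.simps, blast)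
  qed
  show ?thesis
    unfolding modal_algebra_def Let_def
    by (intro conjI ball_LA; simp add: cls_in_LA Box_top Box_And;
        (intro conjI eqv_cls eqv_by_pval)?; auto)
qed

lemmas LA_closed = malg_closed[OF modal_LA]

lemma in_VL_LA: "in_VL L LA"
  unfolding in_VL_def
proof (intro conjI modal_LA ballI allI impI)
  fix p v assume p: "p \<in> L" and v: "assign LA v"
  have "subst (\<lambda>i. from_nat (v i)) p \<in> L" using subst_mem[OF p] .
  then have "eqv (subst (\<lambda>i. from_nat (v i)) p) (Neg Bot)"
    unfolding eqv_def by (rule derives_by_pval1[OF derives_mem]) simp
  then show "eval LA v p = mtop LA" using eval_LA[OF v] eqv_cls by simp
qed

definition gen_var :: "nat \<Rightarrow> nat" where
  "gen_var i = (if i < N then cls (Var i) else cls Bot)"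

lemma assign_gen_var: "assign LA gen_var"
  unfolding assign_def gen_var_def by (auto intro!: cls_in_LA)

lemma eval_gen_var: "vars p \<subseteq> {..<N} \<Longrightarrow> eval LA gen_var p = cls p"
proof -
  assume p: "vars p \<subseteq> {..<N}"
  have "gen_var = (\<lambda>i. cls (if i < N then Var i else Bot))"
    unfolding gen_var_def by auto
  then have "eval LA gen_var p = cls (subst (\<lambda>i. if i < N then Var i else Bot) p)"
    by (simp add: eval_LA_cls)
  also have "subst (\<lambda>i. if i < N then Var i else Bot) p = subst Var p"
    by (rule subst_cong) (use p in auto)
  finally show ?thesis by (simp add: subst_Var)
qed

lemma fin_pres_LA:
  assumes "finite G" and "\<forall>g\<in>G. vars g \<subseteq> {..<N}"
  shows "fin_pres L LA"
  unfolding fin_pres_def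
proof (intro conjI in_VL_LA exI[of _ N] exI[of _ gen_var] exI[of _ "(\<lambda>g. (g, Neg Bot)) ` G"])
  show "assign LA gen_var" by (rule assign_gen_var)
  show "finite ((\<lambda>g. (g, Neg Bot)) ` G)" using assms(1) by simp
  show "\<forall>(s, u)\<in>(\<lambda>g. (g, Neg Bot)) ` G. vars s \<subseteq> {..<N} \<and> vars u \<subseteq> {..<N}"
    using assms(2) by auto
  show "mcar LA = {eval LA gen_var p |p. vars p \<subseteq> {..<N}}"
    unfolding LA_car using eval_gen_var by metis
  have "cls g = cls (Neg Bot)" if "g \<in> G" for g
    by (rule eqv_cls, unfold eqv_def, rule derives_by_pval1[OF derives_hyp[OF that]]) simp
  then show "\<forall>(s, u)\<in>(\<lambda>g. (g, Neg Bot)) ` G. eval LA gen_var s = eval LA gen_var u"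
    using assms(2) eval_gen_var eval_gen_var[of "Neg Bot"] by auto
  show "\<forall>p q. vars p \<subseteq> {..<N} \<longrightarrow> vars q \<subseteq> {..<N} \<longrightarrow>
      eval LA gen_var p = eval LA gen_var q \<longrightarrow>
      (\<forall>(B :: nat malg) b. in_VL L B \<longrightarrow> assign B b \<longrightarrow>
        (\<forall>(s, u)\<in>(\<lambda>g. (g, Neg Bot)) ` G. eval B b s = eval B b u) \<longrightarrow> eval B b p = eval B b q)"
  proof (intro allI impI)
    fix p q and B :: "nat malg" and b
    assume "vars p \<subseteq> {..<N}" "vars q \<subseteq> {..<N}" "eval LA gen_var p = eval LA gen_var q"
      and B: "in_VL L B" and b: "assign B b"
      and hyps: "\<forall>(s, u)\<in>(\<lambda>g. (g, Neg Bot)) ` G. eval B b s = eval B b u"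
    then have "derives G (Iff p q)" using eval_gen_var cls_eq unfolding eqv_def by simp
    moreover have "\<forall>g\<in>G. eval B b g = mtop B"
      using hyps malg_compl_bot B unfolding in_VL_def by auto
    ultimately show "eval B b p = eval B b q" using derives_sound[OF B b] by blast
  qed
qed

lemma gen_gen_var_cls:
  assumes V: "V \<subseteq> {..<N}" and z: "z \<in> gen LA (gen_var ` V)"
  shows "\<exists>q. vars q \<subseteq> V \<and> z = cls q"
proof -
  obtain v p where z_eq: "z = eval LA v p" and v: "\<forall>i. v i \<in> insert (mbot LA) (gen_var ` V)"
    using z unfolding gen_def by blast
  define \<sigma> where "\<sigma> i = (if v i \<in> gen_var ` V then Var (SOME j. j \<in> V \<and> v i = gen_var j) else Bot)"
    for i
  have \<sigma>: "v i = cls (\<sigma> i) \<and> vars (\<sigma> i) \<subseteq> V" for i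
  proof (cases "v i \<in> gen_var ` V")
    case True
    then have "\<exists>j. j \<in> V \<and> v i = gen_var j" by blast
    define j where "j = (SOME j. j \<in> V \<and> v i = gen_var j)"
    have j: "j \<in> V \<and> v i = gen_var j"
      unfolding j_def by (rule someI_ex) fact
    moreover have "\<sigma> i = Var j" using True unfolding \<sigma>_def j_def by simp
    ultimately show ?thesis using V unfolding gen_var_def by auto
  next
    case False
    then show ?thesis using v unfolding \<sigma>_def by auto
  qed
  then have "v = (\<lambda>i. cls (\<sigma> i))" and "\<forall>i. vars (\<sigma> i) \<subseteq> {..<N}"
    using V by auto
  then have "z = cls (subst \<sigma> p)"
    using eval_LA_cls z_eq by simp
  moreover have "vars (subst \<sigma> p) \<subseteq> V" unfolding vars_subst using \<sigma> by blast
  ultimately show ?thesis by blast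
qed


lemma fin_pres_gen_gen_var:
  assumes "coherent L" and "finite G" and "\<forall>g\<in>G. vars g \<subseteq> {..<N}" and V: "V \<subseteq> {..<N}"
  shows "fin_pres L (LA\<lparr>mcar := gen LA (gen_var ` V)\<rparr>)"
proof -
  have "gen_var ` V \<subseteq> mcar LA"
    using assign_gen_var unfolding assign_def by blast
  moreover have "finite (gen_var ` V)"
    using finite_subset[OF V] by simp
  ultimately show ?thesis
    using assms(1) fin_pres_LA[OF assms(2,3)] unfolding coherent_def by blast
qed

text \<open>The data coherence provides for the subalgebra generated by the variables in V: the
  generators are the classes of the formulas qf i over V, each variable j is recovered from them
  as rf j, and the finitely many equations E between the generators entail all others.\<close>

lemma coherent_presentation:
  assumes "coherent L" and "finite G" and "\<forall>g\<in>G. vars g \<subseteq> {..<N}" and V: "V \<subseteq> {..<N}"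
  obtains n E qf rf where
    "finite E" and "\<And>i. vars (qf i) \<subseteq> V" and "\<And>j. j \<in> V \<Longrightarrow> vars (rf j) \<subseteq> {..<n}"
    and "\<And>s u. (s, u) \<in> E \<Longrightarrow> derives G (Iff (subst qf s) (subst qf u))"
    and "\<And>j. j \<in> V \<Longrightarrow> derives G (Iff (subst qf (rf j)) (Var j))"
    and "\<And>P Q (M :: nat malg) b. vars P \<subseteq> {..<n} \<Longrightarrow> vars Q \<subseteq> {..<n} \<Longrightarrow>
      derives G (Iff (subst qf P) (subst qf Q)) \<Longrightarrow> in_VL L M \<Longrightarrow> assign M b \<Longrightarrow>
      \<forall>(s, u)\<in>E. eval M b s = eval M b u \<Longrightarrow> eval M b P = eval M b Q"
proof -
  define B where "B = LA\<lparr>mcar := gen LA (gen_var ` V)\<rparr>"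
  have "fin_pres L B"
    unfolding B_def by (rule fin_pres_gen_gen_var[OF assms])
  then obtain n a E where a: "assign B a" and E: "finite E"
    and car: "mcar B = {eval B a p | p. vars p \<subseteq> {..<n}}"
    and E_holds: "\<forall>(s, u)\<in>E. eval B a s = eval B a u"
    and cons: "\<forall>p q. vars p \<subseteq> {..<n} \<longrightarrow> vars q \<subseteq> {..<n} \<longrightarrow> eval B a p = eval B a q \<longrightarrow>
      (\<forall>(M :: nat malg) b. in_VL L M \<longrightarrow> assign M b \<longrightarrow>
        (\<forall>(s, u)\<in>E. eval M b s = eval M b u) \<longrightarrow> eval M b p = eval M b q)"
    unfolding fin_pres_def by blast
  have eval_B: "eval B v p = eval LA v p" for v p
    unfolding B_def by (rule eval_carrier_update)
  have "\<forall>i. \<exists>q. vars q \<subseteq> V \<and> a i = cls q"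
    using a gen_gen_var_cls[OF V] unfolding assign_def B_def by simp
  then obtain qf where qf: "\<And>i. vars (qf i) \<subseteq> V" "a = (\<lambda>i. cls (qf i))"
    by metis
  have eval_a: "eval B a p = cls (subst qf p)" for p
    unfolding eval_B qf(2) using qf(1) V by (intro eval_LA_cls) blast
  have "\<forall>j\<in>V. \<exists>r. vars r \<subseteq> {..<n} \<and> gen_var j = eval B a r"
  proof
    fix j assume "j \<in> V"
    then have "gen_var j \<in> mcar B"
      unfolding B_def gen_def by (force intro!: exI[of _ "Var 0"])
    then show "\<exists>r. vars r \<subseteq> {..<n} \<and> gen_var j = eval B a r" using car by blast
  qed
  then obtain rf where rf: "\<And>j. j \<in> V \<Longrightarrow> vars (rf j) \<subseteq> {..<n} \<and> gen_var j = eval B a (rf j)"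
    by metis
  show ?thesis
  proof (rule that[OF E qf(1)])
    show "vars (rf j) \<subseteq> {..<n}" if "j \<in> V" for j
      using rf that by blast
    show "derives G (Iff (subst qf s) (subst qf u))" if "(s, u) \<in> E" for s u
      using E_holds that eval_a cls_eq unfolding eqv_def by fastforce
    show "derives G (Iff (subst qf (rf j)) (Var j))" if j: "j \<in> V" for j
    proof -
      have "gen_var j = cls (Var j)" using j V unfolding gen_var_def by auto
      then show ?thesis using rf[OF j] eval_a cls_eq unfolding eqv_def by simp
    qed
    show "eval M b P = eval M b Q"
      if "vars P \<subseteq> {..<n}" "vars Q \<subseteq> {..<n}" "derives G (Iff (subst qf P) (subst qf Q))"
        "in_VL L M" "assign M b" "\<forall>(s, u)\<in>E. eval M b s = eval M b u"
      for P Q and M :: "nat malg" and b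
      using that cons eval_a cls_eq unfolding eqv_def by auto
  qed
qed

end

context lindenbaum
begin

lemma from_nat_LA_ops:
  "derives G (Iff (from_nat (mmeet LA a b)) (And (from_nat a) (from_nat b)))"
  "derives G (Iff (from_nat (mjoin LA a b)) (Or (from_nat a) (from_nat b)))"
  "derives G (Iff (from_nat (mcompl LA a)) (Neg (from_nat a)))"
  "derives G (Iff (from_nat (mbot LA)) Bot)"
  "derives G (Iff (from_nat (mtop LA)) (Neg Bot))"
  unfolding LA_ops LA_cls_simps from_nat_cls by (rule derives_Iff_rep)+

lemma ultrafilterD:
  assumes "ultrafilter LA U"
  shows "U \<subseteq> mcar LA" "mtop LA \<in> U" "mbot LA \<notin> U"
    "a \<in> U \<Longrightarrow> b \<in> U \<Longrightarrow> mmeet LA a b \<in> U"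
    "a \<in> U \<Longrightarrow> b \<in> mcar LA \<Longrightarrow> mmeet LA a b = a \<Longrightarrow> b \<in> U"
    "a \<in> mcar LA \<Longrightarrow> a \<in> U \<or> mcompl LA a \<in> U"
  using assms unfolding ultrafilter_def by blast+

lemma ultrafilter_Conjs:
  assumes U: "ultrafilter LA U"
  shows "set as \<subseteq> U \<Longrightarrow> cls (Conjs (map from_nat as)) \<in> U"
proof (induct as)
  case Nil
  then show ?case using ultrafilterD(2)[OF U] by simp
next
  case (Cons a as)
  then have "mmeet LA a (cls (Conjs (map from_nat as))) \<in> U"
    using ultrafilterD(4)[OF U] by simp
  moreover have "mmeet LA a (cls (Conjs (map from_nat as))) = cls (Conjs (map from_nat (a # as)))"
    unfolding LA_ops by (simp, rule eqv_cls, rule eqv_And, rule eqv_refl, rule eqv_rep)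
  ultimately show ?case by simp
qed

lemma ultrafilter_derives_closed:
  assumes U: "ultrafilter LA U" and as: "set as \<subseteq> U" and b: "b \<in> mcar LA"
    and "derives G (Imp (Conjs (map from_nat as)) (from_nat b))"
  shows "b \<in> U"
proof -
  let ?c = "Conjs (map from_nat as)"
  have "mmeet LA (cls ?c) b = cls (And ?c (from_nat b))"
    using cls_from_nat[OF b] by (metis LA_cls_simps(2))
  also have "\<dots> = cls ?c"
    by (rule eqv_cls, unfold eqv_def, rule derives_by_pval1[OF assms(4)]) auto
  finally show ?thesis using ultrafilterD(5)[OF U ultrafilter_Conjs[OF U as] b] by simp
qed

lemma ultrafilter_derives_mono:
  assumes U: "ultrafilter LA U" and "a \<in> U" "b \<in> mcar LA"
    and "derives G (Imp (from_nat a) (from_nat b))"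
  shows "b \<in> U"
  by (rule ultrafilter_derives_closed[OF U, of "[a]"])
    (use assms in \<open>auto elim!: derives_by_pval1\<close>)

lemma ultrafilter_consistent:
  assumes U: "ultrafilter LA U" and as: "set as \<subseteq> U"
  shows "\<not> derives G (Neg (Conjs (map from_nat as)))"
proof
  assume "derives G (Neg (Conjs (map from_nat as)))"
  then have "derives G (Imp (Conjs (map from_nat as)) (from_nat (mbot LA)))"
    by (rule derives_by_pval2[OF _ from_nat_LA_ops(4)]) auto
  then show False
    using ultrafilter_derives_closed[OF U as LA_closed(1)] ultrafilterD(3)[OF U] by blast
qed

lemma ultrafilter_meet_iff:
  assumes U: "ultrafilter LA U" and a: "a \<in> mcar LA" and b: "b \<in> mcar LA"
  shows "mmeet LA a b \<in> U \<longleftrightarrow> a \<in> U \<and> b \<in> U"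
proof
  assume ab: "mmeet LA a b \<in> U"
  have "derives G (Imp (from_nat (mmeet LA a b)) (from_nat a))"
    "derives G (Imp (from_nat (mmeet LA a b)) (from_nat b))"
    by (rule derives_by_pval1[OF from_nat_LA_ops(1)[of a b]], auto)+
  then show "a \<in> U \<and> b \<in> U"
    using ultrafilter_derives_mono[OF U ab] a b by blast
qed (use ultrafilterD(4)[OF U] in blast)

lemma ultrafilter_compl_iff:
  assumes U: "ultrafilter LA U" and a: "a \<in> mcar LA"
  shows "mcompl LA a \<in> U \<longleftrightarrow> a \<notin> U"
proof
  assume "mcompl LA a \<in> U"
  then have "a \<in> U \<Longrightarrow> set [a, mcompl LA a] \<subseteq> U" by simp
  moreover have "derives G (Neg (Conjs (map from_nat [a, mcompl LA a])))"
    by (rule derives_by_pval1[OF from_nat_LA_ops(3)[of a]]) auto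
  ultimately show "a \<notin> U" using ultrafilter_consistent[OF U] by blast
qed (use ultrafilterD(6)[OF U a] in blast)

lemma ultrafilter_join_iff:
  assumes U: "ultrafilter LA U" and a: "a \<in> mcar LA" and b: "b \<in> mcar LA"
  shows "mjoin LA a b \<in> U \<longleftrightarrow> a \<in> U \<or> b \<in> U"
proof
  assume ab: "mjoin LA a b \<in> U"
  show "a \<in> U \<or> b \<in> U"
  proof (rule ccontr)
    assume "\<not> (a \<in> U \<or> b \<in> U)"
    then have "set [mjoin LA a b, mcompl LA a, mcompl LA b] \<subseteq> U"
      using ab ultrafilter_compl_iff[OF U] a b by auto
    moreover have "derives G (Neg (Conjs (map from_nat [mjoin LA a b, mcompl LA a, mcompl LA b])))"
      by (rule derives_by_pval3[OF from_nat_LA_ops(2)[of a b] from_nat_LA_ops(3)[of a]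
            from_nat_LA_ops(3)[of b]]) auto
    ultimately show False using ultrafilter_consistent[OF U] by blast
  qed
next
  have "derives G (Imp (from_nat a) (from_nat (mjoin LA a b)))"
    "derives G (Imp (from_nat b) (from_nat (mjoin LA a b)))"
    by (rule derives_by_pval1[OF from_nat_LA_ops(2)[of a b]], auto)+
  moreover assume "a \<in> U \<or> b \<in> U"
  ultimately show "mjoin LA a b \<in> U"
    using ultrafilter_derives_mono[OF U _ LA_closed(3)[OF a b]] by blast
qed

text \<open>Lindenbaum's lemma; ext_chain decides the elements of the countable carrier one at a
  time.\<close>

definition fin_consistent :: "nat set \<Rightarrow> bool" where
  "fin_consistent T \<longleftrightarrow> (\<forall>as. set as \<subseteq> T \<longrightarrow> \<not> derives G (Neg (Conjs (map from_nat as))))"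

lemma fin_consistentD:
  "fin_consistent T \<Longrightarrow> set as \<subseteq> T \<Longrightarrow> derives G (Neg (Conjs (map from_nat as))) \<Longrightarrow> False"
  unfolding fin_consistent_def by blast

lemma fin_consistent_singleton:
  assumes "\<not> derives G (Neg (from_nat a))"
  shows "fin_consistent {a}"
  unfolding fin_consistent_def
proof (intro allI impI notI)
  fix as assume "set as \<subseteq> {a}" and "derives G (Neg (Conjs (map from_nat as)))"
  then have "derives G (Neg (from_nat a))"
    by (elim derives_by_pval1) auto
  then show False using assms by blast
qed

lemma fin_consistent_insert_compl:
  assumes T: "fin_consistent T" and a: "\<not> fin_consistent (insert a T)"
  shows "fin_consistent (insert (mcompl LA a) T)"
  unfolding fin_consistent_def
proof (intro allI impI notI)
  fix as2 assume as2: "set as2 \<subseteq> insert (mcompl LA a) T"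
    and inc2: "derives G (Neg (Conjs (map from_nat as2)))"
  obtain as1 where as1: "set as1 \<subseteq> insert a T"
    and inc1: "derives G (Neg (Conjs (map from_nat as1)))"
    using a unfolding fin_consistent_def by blast
  let ?as = "filter (\<lambda>z. z \<in> T) (as1 @ as2)"
  have "derives G (Neg (Conjs (map from_nat ?as)))"
  proof (rule derives_by_pval3[OF inc1 inc2 from_nat_LA_ops(3)[of a]])
    fix V
    assume "pval V (Neg (Conjs (map from_nat as1)))" "pval V (Neg (Conjs (map from_nat as2)))"
      and compl: "pval V (Iff (from_nat (mcompl LA a)) (Neg (from_nat a)))"
    then obtain z1 z2 where z: "z1 \<in> set as1" "\<not> pval V (from_nat z1)"
      "z2 \<in> set as2" "\<not> pval V (from_nat z2)"
      by auto
    show "pval V (Neg (Conjs (map from_nat ?as)))"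
    proof (rule ccontr)
      assume "\<not> ?thesis"
      then have "z1 \<notin> T" "z2 \<notin> T" using z by auto
      then show False using z as1 as2 compl by auto
    qed
  qed
  moreover have "set ?as \<subseteq> T" by auto
  ultimately show False using fin_consistentD[OF T] by blast
qed

primrec ext_chain :: "nat set \<Rightarrow> nat \<Rightarrow> nat set" where
  "ext_chain T 0 = T"
| "ext_chain T (Suc n) =
    (if n \<notin> mcar LA then ext_chain T n
     else if fin_consistent (insert n (ext_chain T n)) then insert n (ext_chain T n)
     else insert (mcompl LA n) (ext_chain T n))"

lemma fin_consistent_ultrafilter:
  assumes U: "U \<subseteq> mcar LA" and cons: "fin_consistent U"
    and max: "\<forall>a\<in>mcar LA. a \<in> U \<or> mcompl LA a \<in> U"
  shows "ultrafilter LA U"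
proof -
  have top: "mtop LA \<in> U"
  proof (rule ccontr)
    assume "mtop LA \<notin> U"
    then have "set [mcompl LA (mtop LA)] \<subseteq> U" using max LA_closed(2) by auto
    moreover have "derives G (Neg (Conjs (map from_nat [mcompl LA (mtop LA)])))"
      by (rule derives_by_pval2[OF from_nat_LA_ops(3)[of "mtop LA"] from_nat_LA_ops(5)]) auto
    ultimately show False using fin_consistentD[OF cons] by blast
  qed
  have bot: "mbot LA \<notin> U"
  proof
    assume "mbot LA \<in> U"
    then have "set [mbot LA] \<subseteq> U" by auto
    moreover have "derives G (Neg (Conjs (map from_nat [mbot LA])))"
      by (rule derives_by_pval1[OF from_nat_LA_ops(4)]) auto
    ultimately show False using fin_consistentD[OF cons] by blast
  qed
  have meet: "mmeet LA a b \<in> U" if ab: "a \<in> U" "b \<in> U" for a b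
  proof (rule ccontr)
    assume "mmeet LA a b \<notin> U"
    moreover have "mmeet LA a b \<in> mcar LA" using ab U LA_closed(4) by blast
    ultimately have "set [a, b, mcompl LA (mmeet LA a b)] \<subseteq> U" using max ab by auto
    moreover have "derives G (Neg (Conjs (map from_nat [a, b, mcompl LA (mmeet LA a b)])))"
      by (rule derives_by_pval2[OF from_nat_LA_ops(3)[of "mmeet LA a b"] from_nat_LA_ops(1)[of a b]])
        auto
    ultimately show False using fin_consistentD[OF cons] by blast
  qed
  have up: "b \<in> U" if ab: "a \<in> U" "b \<in> mcar LA" "mmeet LA a b = a" for a b
  proof (rule ccontr)
    assume "b \<notin> U"
    then have "set [a, mcompl LA b] \<subseteq> U" using max ab by auto
    moreover have "derives G (Iff (from_nat a) (And (from_nat a) (from_nat b)))"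
      using from_nat_LA_ops(1)[of a b] ab(3) by simp
    then have "derives G (Neg (Conjs (map from_nat [a, mcompl LA b])))"
      by (rule derives_by_pval2[OF from_nat_LA_ops(3)[of b]]) auto
    ultimately show False using fin_consistentD[OF cons] by blast
  qed
  show ?thesis
    unfolding ultrafilter_def using U top bot meet up max by blast
qed

lemma ultrafilter_extend:
  assumes T: "T \<subseteq> mcar LA" "fin_consistent T"
  shows "\<exists>U. ultrafilter LA U \<and> T \<subseteq> U"
proof -
  have chain_cons: "fin_consistent (ext_chain T n)" for n
    by (induct n) (auto simp: T fin_consistent_insert_compl)
  have chain_LA: "ext_chain T n \<subseteq> mcar LA" for n
    by (induct n) (auto simp: T LA_closed(5))
  have chain_mono: "m \<le> n \<Longrightarrow> ext_chain T m \<subseteq> ext_chain T n" for m n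
    by (rule lift_Suc_mono_le[of "ext_chain T"]) auto
  define U where "U = (\<Union>n. ext_chain T n)"
  have "\<exists>n. set as \<subseteq> ext_chain T n" if "set as \<subseteq> U" for as
    using that
  proof (induct as)
    case (Cons a as)
    then obtain m n where "a \<in> ext_chain T m" "set as \<subseteq> ext_chain T n"
      unfolding U_def by auto
    then have "set (a # as) \<subseteq> ext_chain T (max m n)"
      using chain_mono[of m "max m n"] chain_mono[of n "max m n"] by auto
    then show ?case by blast
  qed simp
  then have "fin_consistent U"
    using chain_cons unfolding fin_consistent_def by blast
  moreover have "a \<in> U \<or> mcompl LA a \<in> U" if "a \<in> mcar LA" for a
    using that unfolding U_def by (auto intro!: exI[of _ "Suc a"])
  moreover have "U \<subseteq> mcar LA" "T \<subseteq> U"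
    unfolding U_def using chain_LA ext_chain.simps(1)[of T] by blast+
  ultimately show ?thesis
    using fin_consistent_ultrafilter by blast
qed

end

section \<open>The canonical extension of a Lindenbaum-Tarski algebra\<close>

lemma canext_simps [simp]:
  "mcar (canext A) = Pow (Uf A)" "mjoin (canext A) = (\<union>)" "mmeet (canext A) = (\<inter>)"
  "mcompl (canext A) = (\<lambda>X. Uf A - X)" "mbot (canext A) = {}" "mtop (canext A) = Uf A"
  "mbox (canext A) = (\<lambda>X. sigma_ext A {0} (\<lambda>a. mbox A (a 0)) (\<lambda>_. X))"
  unfolding canext_def by simp_all

lemma sigma_ext_iff:
  "U \<in> sigma_ext A V f X \<longleftrightarrow>
    (\<exists>k o'. (\<forall>i\<in>V. closed_el A (k i) \<and> open_el A (o' i) \<and> k i \<subseteq> X i \<and> X i \<subseteq> o' i) \<and>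
      U \<in> Uf A \<and>
      (\<forall>a. assign A a \<and> (\<forall>i\<in>V. k i \<subseteq> emb A (a i) \<and> emb A (a i) \<subseteq> o' i) \<longrightarrow> U \<in> emb A (f a)))"
proof -
  have Union_iff: "U \<in> \<Union>{F k o' | k o'. P k o'} \<longleftrightarrow> (\<exists>k o'. P k o' \<and> U \<in> F k o')"
    for F :: "(nat \<Rightarrow> 'a set set) \<Rightarrow> (nat \<Rightarrow> 'a set set) \<Rightarrow> 'a set set" and P
    by blast
  have Inter_iff: "U \<in> \<Inter>{F a | a. P a} \<longleftrightarrow> (\<forall>a. P a \<longrightarrow> U \<in> F a)"
    for F :: "(nat \<Rightarrow> 'a) \<Rightarrow> 'a set set" and P
    by blast
  show ?thesis
    unfolding sigma_ext_def Union_iff Int_iff Inter_iff by (rule refl)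
qed

context lindenbaum
begin

lemma emb_sub_Uf: "emb LA a \<subseteq> Uf LA"
  unfolding emb_def by blast

lemma mem_Uf_iff: "U \<in> Uf LA \<longleftrightarrow> ultrafilter LA U"
  unfolding Uf_def by simp

lemma emb_meet: "a \<in> mcar LA \<Longrightarrow> b \<in> mcar LA \<Longrightarrow> emb LA (mmeet LA a b) = emb LA a \<inter> emb LA b"
  unfolding emb_def mem_Uf_iff using ultrafilter_meet_iff by blast

lemma emb_join: "a \<in> mcar LA \<Longrightarrow> b \<in> mcar LA \<Longrightarrow> emb LA (mjoin LA a b) = emb LA a \<union> emb LA b"
  unfolding emb_def mem_Uf_iff using ultrafilter_join_iff by blast

lemma emb_compl: "a \<in> mcar LA \<Longrightarrow> emb LA (mcompl LA a) = Uf LA - emb LA a"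
  unfolding emb_def using ultrafilter_compl_iff by (auto simp: mem_Uf_iff)

lemma emb_bot: "emb LA (cls Bot) = {}"
  unfolding emb_def mem_Uf_iff using ultrafilterD(3)[unfolded LA_cls_simps] by blast

lemma derives_Imp_if_emb_subset:
  assumes a: "a \<in> mcar LA" and b: "b \<in> mcar LA" and sub: "emb LA a \<subseteq> emb LA b"
  shows "derives G (Imp (from_nat a) (from_nat b))"
proof (rule ccontr)
  let ?c = "mmeet LA a (mcompl LA b)"
  assume "\<not> ?thesis"
  moreover have "derives G (Imp (from_nat a) (from_nat b))" if "derives G (Neg (from_nat ?c))"
    by (rule derives_by_pval3[OF that from_nat_LA_ops(1)[of a "mcompl LA b"] from_nat_LA_ops(3)[of b]])
      auto
  ultimately have "fin_consistent {?c}"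
    using fin_consistent_singleton by blast
  moreover have "{?c} \<subseteq> mcar LA"
    using LA_closed(4,5) a b by simp
  ultimately obtain U where U: "ultrafilter LA U" "?c \<in> U"
    using ultrafilter_extend by blast
  then have "a \<in> U" "b \<notin> U"
    using ultrafilter_meet_iff[OF U(1) a] ultrafilter_compl_iff[OF U(1) b] LA_closed(5) b by auto
  then show False
    using sub U(1) unfolding emb_def mem_Uf_iff by blast
qed

lemma emb_inj:
  assumes a: "a \<in> mcar LA" and b: "b \<in> mcar LA" and "emb LA a = emb LA b"
  shows "a = b"
proof -
  have "derives G (Imp (from_nat a) (from_nat b))" "derives G (Imp (from_nat b) (from_nat a))"
    using derives_Imp_if_emb_subset[OF a b] derives_Imp_if_emb_subset[OF b a] assms(3) by simp_all
  then have "derives G (Iff (from_nat a) (from_nat b))"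
    by (rule derives_by_pval2) auto
  then have "cls (from_nat a) = cls (from_nat b)"
    using eqv_cls unfolding eqv_def by blast
  then show ?thesis
    using cls_from_nat[OF a] cls_from_nat[OF b] by simp
qed

lemma emb_box:
  assumes a: "a \<in> mcar LA"
  shows "mbox (canext LA) (emb LA a) = emb LA (mbox LA a)"
proof
  show "mbox (canext LA) (emb LA a) \<subseteq> emb LA (mbox LA a)"
  proof
    fix U assume "U \<in> mbox (canext LA) (emb LA a)"
    then obtain k o' :: "nat \<Rightarrow> nat set set" where
      "k 0 \<subseteq> emb LA a" "emb LA a \<subseteq> o' 0"
      and U: "\<forall>a'. assign LA a' \<and> k 0 \<subseteq> emb LA (a' 0) \<and> emb LA (a' 0) \<subseteq> o' 0 \<longrightarrow>
        U \<in> emb LA (mbox LA (a' 0))"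
      unfolding canext_simps sigma_ext_iff by auto
    moreover have "assign LA (\<lambda>_. a)" using a unfolding assign_def by blast
    ultimately show "U \<in> emb LA (mbox LA a)" by auto
  qed
next
  text \<open>emb a is clopen, so it is its own closed and open approximation.\<close>
  have clopen: "closed_el LA (emb LA a)" "open_el LA (emb LA a)"
    unfolding closed_el_def open_el_def using a emb_sub_Uf[of a]
    by (intro exI[of _ "{a}"]; auto)+
  show "emb LA (mbox LA a) \<subseteq> mbox (canext LA) (emb LA a)"
  proof
    fix U assume U: "U \<in> emb LA (mbox LA a)"
    have "U \<in> emb LA (mbox LA (a' 0))" if "assign LA a'" "emb LA (a' 0) = emb LA a" for a'
    proof -
      have "a' 0 = a" using emb_inj[OF _ a] that unfolding assign_def by blast
      then show ?thesis using U by simp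
    qed
    then show "U \<in> mbox (canext LA) (emb LA a)"
      unfolding canext_simps sigma_ext_iff using clopen U emb_sub_Uf
      by (intro exI[of _ "\<lambda>_. emb LA a"]) blast
  qed
qed

lemma emb_hom:
  assumes v: "assign LA v"
  shows "eval (canext LA) (\<lambda>i. emb LA (v i)) p = emb LA (eval LA v p)"
proof (induct p)
  case (Neg p)
  then show ?case using emb_compl eval_closed[OF modal_LA v] by simp
next
  case (And p q)
  then show ?case using emb_meet eval_closed[OF modal_LA v] by simp
next
  case (Or p q)
  then show ?case using emb_join eval_closed[OF modal_LA v] by simp
next
  case (Box p)
  then show ?case using emb_box eval_closed[OF modal_LA v] by (simp del: canext_simps)
qed (simp_all add: emb_bot)
lemma closed_below_chain:
  fixes E :: "nat \<Rightarrow> form"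
  assumes E: "\<And>K. vars (E K) \<subseteq> {..<N}"
    and mono: "\<And>K K'. K \<le> K' \<Longrightarrow> derives G (Imp (E K) (E K'))"
    and k: "closed_el LA k" and sub: "k \<subseteq> (\<Union>K. emb LA (cls (E K)))"
  shows "\<exists>K. k \<subseteq> emb LA (cls (E K))"
proof (rule ccontr)
  assume none: "\<not> ?thesis"
  obtain S where S: "S \<subseteq> mcar LA" "k = Uf LA \<inter> \<Inter> (emb LA ` S)"
    using k unfolding closed_el_def by blast
  have E_LA: "cls (E K) \<in> mcar LA" for K
    using E by (rule cls_in_LA)
  define T where "T = S \<union> range (\<lambda>K. mcompl LA (cls (E K)))"
  have T_LA: "T \<subseteq> mcar LA"
    unfolding T_def using S(1) by (auto simp del: LA_cls_simps intro!: LA_closed(5) E_LA)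
  have in_k: "U \<in> k \<longleftrightarrow> ultrafilter LA U \<and> S \<subseteq> U" for U
    unfolding S(2) by (auto simp: emb_def mem_Uf_iff)
  have "fin_consistent T"
    unfolding fin_consistent_def
  proof (intro allI impI)
    fix as assume as: "set as \<subseteq> T"
    obtain K' where K': "set as \<subseteq> S \<union> (\<lambda>K. mcompl LA (cls (E K))) ` {..K'}"
      using finite_subset_Un_range_bound[of "set as"] as unfolding T_def by blast
    from none obtain U where "U \<in> k" "U \<notin> emb LA (cls (E K'))"
      by blast
    then have uf: "ultrafilter LA U" and "S \<subseteq> U" and U: "cls (E K') \<notin> U"
      using in_k unfolding emb_def mem_Uf_iff by auto
    moreover have "mcompl LA (cls (E K)) \<in> U" if "K \<le> K'" for K
    proof -
      have "derives G (Imp (from_nat (cls (E K))) (from_nat (cls (E K'))))"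
        unfolding from_nat_cls
        by (rule derives_by_pval3[OF derives_Iff_rep[of "E K"] derives_Iff_rep[of "E K'"] mono[OF that]])
          auto
      then have "cls (E K) \<notin> U"
        using ultrafilter_derives_mono[OF uf _ E_LA] U by blast
      then show ?thesis using ultrafilter_compl_iff[OF uf E_LA] by blast
    qed
    ultimately have "set as \<subseteq> U"
      using K' by auto
    then show "\<not> derives G (Neg (Conjs (map from_nat as)))"
      using ultrafilter_consistent[OF uf] by blast
  qed
  then obtain U where U: "ultrafilter LA U" "T \<subseteq> U"
    using ultrafilter_extend[OF T_LA] by blast
  then have "U \<in> k"
    using in_k unfolding T_def by blast
  then obtain K where "U \<in> emb LA (cls (E K))"
    using sub by blast
  then have "cls (E K) \<in> U"
    unfolding emb_def by blast
  moreover have "mcompl LA (cls (E K)) \<in> U"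
    using U(2) unfolding T_def by blast
  ultimately show False
    using ultrafilter_compl_iff[OF U(1) E_LA] by blast
qed

end

locale iteration = normal_modal_logic +
  fixes x :: nat and t :: form
begin

abbreviation I :: "nat \<Rightarrow> form" where
  "I k \<equiv> iter x (tplus x t) k"

lemma I_Suc: "I (Suc k) = Or (I k) (subst1 x (I k) t)"
  by (simp add: tplus_def)

lemma vars_I: "vars (I k) \<subseteq> insert x (vars t)"
proof (induct k)
  case (Suc k)
  then show ?case using vars_subst1[of x "I k" t] unfolding I_Suc by auto
qed simp

lemma I_mono: "k \<le> k' \<Longrightarrow> Imp (I k) (I k') \<in> L"
proof (induct k' rule: dec_induct)
  case base
  then show ?case by (rule pval_valid_mem) simp
next
  case (step n)
  show ?case by (rule mem_by_pval1[OF step(3)]) (unfold I_Suc pval_Imp pval.simps, blast)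
qed

definition w :: nat where
  "w = Suc (Max (insert x (vars t)))"

definition y :: nat where
  "y = Suc w"

definition NN :: nat where
  "NN = Suc y"

definition Vfree :: "nat set" where
  "Vfree = {..<NN} - {y}"

lemma less_w: "i \<in> insert x (vars t) \<Longrightarrow> i < w"
  unfolding w_def using finite_vars[of t] by (simp add: le_imp_less_Suc)

lemma fresh_w_y: "w \<notin> vars (I k)" "y \<notin> vars (I k)" "y \<notin> vars t" "x \<noteq> y" "x \<noteq> w"
  using vars_I[of k] less_w[of w] less_w[of y] less_w[of x] unfolding y_def by auto

lemma vars_t_Vfree: "vars t \<subseteq> Vfree"
  using less_w unfolding Vfree_def NN_def y_def by fastforce

lemma vars_I_Vfree: "vars (I k) \<subseteq> Vfree"
  using vars_I[of k] less_w unfolding Vfree_def NN_def y_def by fastforce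

lemma vars_I_less_NN: "vars (I k) \<subseteq> {..<NN}"
  using vars_I_Vfree unfolding Vfree_def by blast

lemma x_w_Vfree: "x \<in> Vfree" "w \<in> Vfree"
  using fresh_w_y less_w[of x] unfolding Vfree_def NN_def y_def by auto

lemma Vfree_less_NN: "Vfree \<subseteq> {..<NN}"
  unfolding Vfree_def by auto

definition delta :: form where
  "delta = And (Imp (Var w) (Var y))
     (And (Imp (Var x) (Neg (Var y))) (Imp (subst1 x (Neg (Var y)) t) (Neg (Var y))))"

lemma vars_delta: "vars delta \<subseteq> {..<NN}"
  using vars_subst1[of x "Neg (Var y)" t] vars_t_Vfree x_w_Vfree
  unfolding delta_def Vfree_def NN_def by auto

lemma delta_I_below_Neg_y:
  assumes "pos_only x t"
  shows "derives {delta} (Imp (I k) (Neg (Var y)))"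
proof (induct k)
  case 0
  show ?case by (rule derives_by_pval1[OF derives_hyp[OF singletonI]]) (auto simp: delta_def)
next
  case (Suc k)
  have "derives {delta} (Imp (subst1 x (I k) t) (subst1 x (Neg (Var y)) t))"
    using derives_subst1_mono assms Suc by blast
  then show ?case unfolding I_Suc
    by (rule derives_by_pval3[OF _ Suc derives_hyp[OF singletonI]]) (auto simp: delta_def)
qed

definition Excl :: "nat \<Rightarrow> form set" where
  "Excl K = (\<lambda>k. Neg (And (Var w) (I k))) ` {..K}"

definition Excl_all :: "form set" where
  "Excl_all = range (\<lambda>k. Neg (And (Var w) (I k)))"

lemma Excl_mono: "K \<le> K' \<Longrightarrow> Excl K \<subseteq> Excl K'"
  unfolding Excl_def by auto

lemma Excl_all_finite_bound:
  assumes "finite G" and "G \<subseteq> Excl_all"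
  shows "\<exists>K. G \<subseteq> Excl K"
  using finite_subset_Un_range_bound[of G "{}"] assms unfolding Excl_all_def Excl_def by simp

lemma Excl_uniform_bound:
  assumes "finite \<Phi>" and "\<forall>\<phi>\<in>\<Phi>. \<exists>K. derives (Excl K) \<phi>"
  shows "\<exists>K. \<forall>\<phi>\<in>\<Phi>. derives (Excl K) \<phi>"
  using assms
proof (induct \<Phi> rule: finite_induct)
  case (insert \<phi> \<Phi>)
  then obtain K K' where "\<forall>\<psi>\<in>\<Phi>. derives (Excl K) \<psi>" "derives (Excl K') \<phi>" by auto
  then have "\<forall>\<psi>\<in>insert \<phi> \<Phi>. derives (Excl (max K K')) \<psi>"
    using derives_mono[OF Excl_mono] by (metis insert_iff max.cobounded1 max.cobounded2)
  then show ?case by blast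
qed simp

end

section \<open>Compactness in the canonical extension\<close>

context iteration
begin

sublocale C: lindenbaum L NN Excl_all ..

definition I_open :: "nat set set" where
  "I_open = (\<Union>k. emb C.LA (C.cls (I k)))"

definition can_val :: "nat \<Rightarrow> nat set set" where
  "can_val i = emb C.LA (C.gen_var i)"

lemma I_in_C: "C.cls (I k) \<in> mcar C.LA"
  using C.cls_in_LA vars_I_less_NN by blast

lemma I_open_sub_Uf: "I_open \<subseteq> Uf C.LA"
  unfolding I_open_def using C.emb_sub_Uf by blast

lemma can_val_var: "i < NN \<Longrightarrow> can_val i = emb C.LA (C.cls (Var i))"
  unfolding can_val_def C.gen_var_def by simp

lemma eval_t_at_I:
  "eval C.LA (C.gen_var(x := C.cls (I k))) t = C.cls (subst1 x (I k) t)"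
proof -
  have "C.gen_var(x := C.cls (I k)) =
      (\<lambda>i. C.cls (if i = x then I k else if i < NN then Var i else Bot))"
    unfolding C.gen_var_def by auto
  then have "eval C.LA (C.gen_var(x := C.cls (I k))) t =
      C.cls (subst (\<lambda>i. if i = x then I k else if i < NN then Var i else Bot) t)"
    using vars_I_less_NN[of k] by (auto intro!: C.eval_LA_cls split: if_split_asm)
  moreover have "subst (\<lambda>i. if i = x then I k else if i < NN then Var i else Bot) t =
      subst1 x (I k) t"
    unfolding subst1_def by (rule subst_cong) (use vars_t_Vfree Vfree_less_NN in auto)
  ultimately show ?thesis by simp
qed

lemma emb_t_at_I_sub_I_open: "emb C.LA (C.cls (subst1 x (I k) t)) \<subseteq> I_open"
proof
  fix U assume U: "U \<in> emb C.LA (C.cls (subst1 x (I k) t))"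
  then have uf: "ultrafilter C.LA U"
    unfolding emb_def Uf_def by blast
  have "derives Excl_all
      (Imp (from_nat (C.cls (subst1 x (I k) t))) (from_nat (C.cls (I (Suc k)))))"
    unfolding C.from_nat_cls
    by (rule derives_by_pval2[OF C.derives_Iff_rep[of "subst1 x (I k) t"]
          C.derives_Iff_rep[of "I (Suc k)"]])
      (unfold I_Suc pval_Imp pval_Iff pval.simps, blast)
  then have "C.cls (I (Suc k)) \<in> U"
    using C.ultrafilter_derives_mono[OF uf _ I_in_C] U unfolding emb_def by blast
  then have "U \<in> emb C.LA (C.cls (I (Suc k)))"
    using U unfolding emb_def by blast
  then show "U \<in> I_open" unfolding I_open_def by blast
qed

lemma sigma_ext_t_I_open:
  "sigma_ext C.LA (vars t) (\<lambda>a. eval C.LA a t) (can_val(x := I_open)) \<subseteq> I_open"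
proof
  fix U assume "U \<in> sigma_ext C.LA (vars t) (\<lambda>a. eval C.LA a t) (can_val(x := I_open))"
  then obtain k o' where
    ko: "\<forall>i\<in>vars t. closed_el C.LA (k i) \<and> open_el C.LA (o' i) \<and>
      k i \<subseteq> (can_val(x := I_open)) i \<and> (can_val(x := I_open)) i \<subseteq> o' i"
    and H: "\<And>a. assign C.LA a \<Longrightarrow> \<forall>i\<in>vars t. k i \<subseteq> emb C.LA (a i) \<and> emb C.LA (a i) \<subseteq> o' i
      \<Longrightarrow> U \<in> emb C.LA (eval C.LA a t)"
    unfolding sigma_ext_iff by blast
  obtain K where K: "x \<in> vars t \<Longrightarrow> k x \<subseteq> emb C.LA (C.cls (I K))"
  proof (cases "x \<in> vars t")
    case True
    have "K \<le> K' \<Longrightarrow> derives Excl_all (Imp (I K) (I K'))" for K K'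
      by (rule derives_mem[OF I_mono])
    moreover have "closed_el C.LA (k x)" "k x \<subseteq> I_open"
      using ko[rule_format, OF True] by simp_all
    ultimately obtain K where "k x \<subseteq> emb C.LA (C.cls (I K))"
      using C.closed_below_chain[of I] vars_I_Vfree Vfree_less_NN unfolding I_open_def by blast
    then show ?thesis using that by blast
  qed (use that in blast)
  define a where "a = C.gen_var(x := C.cls (I K))"
  have a: "assign C.LA a"
    using C.assign_gen_var I_in_C unfolding a_def assign_def by auto
  have "k i \<subseteq> emb C.LA (a i) \<and> emb C.LA (a i) \<subseteq> o' i" if i: "i \<in> vars t" for i
  proof (cases "i = x")
    case True
    have "emb C.LA (C.cls (I K)) \<subseteq> I_open" unfolding I_open_def by blast
    then show ?thesis using ko[rule_format, OF i] K i True unfolding a_def by auto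
  next
    case False
    then show ?thesis using ko[rule_format, OF i] unfolding a_def can_val_def by simp
  qed
  then have "U \<in> emb C.LA (eval C.LA a t)" using H a by blast
  then show "U \<in> I_open"
    using emb_t_at_I_sub_I_open unfolding a_def eval_t_at_I by blast
qed

text \<open>w misses every I k by the hypotheses Excl_all, x = I 0 lies in I_open, and by stability
  t(I_open) is the sigma-extension bounded in sigma_ext_t_I_open.\<close>

lemma delta_canext:
  assumes "stable t"
  shows "eval (canext C.LA) (can_val(y := Uf C.LA - I_open)) delta = Uf C.LA"
proof -
  let ?v = "can_val(y := Uf C.LA - I_open)"
  have w_disj: "can_val w \<inter> I_open = {}"
  proof -
    have "emb C.LA (C.cls (Var w)) \<inter> emb C.LA (C.cls (I k)) = emb C.LA (C.cls (And (Var w) (I k)))"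
      for k
      using C.emb_meet[OF C.cls_in_LA I_in_C] x_w_Vfree Vfree_less_NN by auto
    moreover have "C.cls (And (Var w) (I k)) = C.cls Bot" for k
      by (rule C.eqv_cls, unfold C.eqv_def, rule derives_by_pval1[OF derives_hyp])
        (auto simp: Excl_all_def)
    moreover have "can_val w = emb C.LA (C.cls (Var w))"
      using can_val_var x_w_Vfree Vfree_less_NN by auto
    ultimately show ?thesis
      using C.emb_bot unfolding I_open_def by auto
  qed
  have "can_val x = emb C.LA (C.cls (I 0))"
    using can_val_var x_w_Vfree Vfree_less_NN by auto
  then have x_sub: "can_val x \<subseteq> I_open"
    unfolding I_open_def by blast
  have assign_v: "assign (canext C.LA) (can_val(x := I_open))"
    using C.emb_sub_Uf I_open_sub_Uf unfolding assign_def can_val_def by auto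
  have "eval (canext C.LA) ?v (subst1 x (Neg (Var y)) t) = eval (canext C.LA) (can_val(x := I_open)) t"
    unfolding subst1_def eval_subst
    using fresh_w_y(3,4) I_open_sub_Uf by (intro eval_cong) auto
  also have "\<dots> = sigma_ext C.LA (vars t) (\<lambda>a. eval C.LA a t) (can_val(x := I_open))"
    using assms C.modal_LA assign_v unfolding stable_def by simp
  finally have t_sub: "eval (canext C.LA) ?v (subst1 x (Neg (Var y)) t) \<subseteq> I_open"
    using sigma_ext_t_I_open by simp
  have "?v w = can_val w" "?v x = can_val x" "?v y = Uf C.LA - I_open"
    using fresh_w_y(4) unfolding y_def by auto
  then have "eval (canext C.LA) ?v delta =
      (Uf C.LA - can_val w \<union> (Uf C.LA - I_open)) \<inter>
      ((Uf C.LA - can_val x \<union> (Uf C.LA - (Uf C.LA - I_open))) \<inter>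
       (Uf C.LA - eval (canext C.LA) ?v (subst1 x (Neg (Var y)) t) \<union> (Uf C.LA - (Uf C.LA - I_open))))"
    unfolding delta_def Imp_def by simp
  also have "\<dots> = Uf C.LA"
    using w_disj x_sub t_sub I_open_sub_Uf by blast
  finally show ?thesis .
qed

lemma delta_compact:
  assumes "countably_canonical L" and "stable t"
    and "vars p \<subseteq> Vfree" "vars q \<subseteq> Vfree" and "derives {delta} (Iff p q)"
  shows "\<exists>K. derives (Excl K) (Iff p q)"
proof -
  let ?v = "can_val(y := Uf C.LA - I_open)"
  have VL: "in_VL L (canext C.LA)"
    using assms(1) C.in_VL_LA unfolding countably_canonical_def by blast
  have assign_v: "assign (canext C.LA) ?v"
    using C.emb_sub_Uf unfolding assign_def can_val_def by auto
  have eval_v: "eval (canext C.LA) ?v r = emb C.LA (C.cls r)" if "vars r \<subseteq> Vfree" for r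
  proof -
    have "eval (canext C.LA) ?v r = eval (canext C.LA) (\<lambda>i. emb C.LA (C.gen_var i)) r"
      using that unfolding Vfree_def can_val_def by (intro eval_cong) auto
    also have "\<dots> = emb C.LA (C.cls r)"
      using C.emb_hom[OF C.assign_gen_var] C.eval_gen_var that Vfree_less_NN by auto
    finally show ?thesis .
  qed
  have "eval (canext C.LA) ?v p = eval (canext C.LA) ?v q"
    using derives_sound[OF VL assign_v _ assms(5)] delta_canext[OF assms(2)] by simp
  then have "emb C.LA (C.cls p) = emb C.LA (C.cls q)"
    using eval_v assms(3,4) by simp
  moreover have "C.cls p \<in> mcar C.LA" "C.cls q \<in> mcar C.LA"
    using assms(3,4) Vfree_less_NN by (auto intro!: C.cls_in_LA)
  ultimately have "C.cls p = C.cls q"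
    using C.emb_inj by blast
  then have "derives Excl_all (Iff p q)"
    using C.cls_eq unfolding C.eqv_def by blast
  then obtain G0 where G0: "finite G0" "G0 \<subseteq> Excl_all" "derives G0 (Iff p q)"
    using derives_finite_hyps by blast
  then obtain K where "G0 \<subseteq> Excl K"
    using Excl_all_finite_bound by blast
  then show ?thesis
    using derives_mono G0(3) by blast
qed

end

context iteration
begin

text \<open>Coherence applied to the algebra presented by delta, with its y-free generators; by
  compactness, the finitely many facts that the presentation consists of already follow from
  Excl K for a single K.\<close>

lemma delta_bounded_presentation:
  assumes "coherent L" and "countably_canonical L" and "stable t"
  obtains n E qf rf K where
    "\<And>i. vars (qf i) \<subseteq> Vfree" and "\<And>j. j \<in> Vfree \<Longrightarrow> vars (rf j) \<subseteq> {..<n}"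
    and "\<And>s u. (s, u) \<in> E \<Longrightarrow> derives (Excl K) (Iff (subst qf s) (subst qf u))"
    and "\<And>j. j \<in> Vfree \<Longrightarrow> derives {delta} (Iff (subst qf (rf j)) (Var j))"
    and "\<And>j. j \<in> Vfree \<Longrightarrow> derives (Excl K) (Iff (subst qf (rf j)) (Var j))"
    and "\<And>P Q (M :: nat malg) b. vars P \<subseteq> {..<n} \<Longrightarrow> vars Q \<subseteq> {..<n} \<Longrightarrow>
      derives {delta} (Iff (subst qf P) (subst qf Q)) \<Longrightarrow> in_VL L M \<Longrightarrow> assign M b \<Longrightarrow>
      \<forall>(s, u)\<in>E. eval M b s = eval M b u \<Longrightarrow> eval M b P = eval M b Q"
proof -
  interpret A: lindenbaum L NN "{delta}" ..
  obtain n E qf rf where E: "finite E" and qf: "\<And>i. vars (qf i) \<subseteq> Vfree"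
    and rf: "\<And>j. j \<in> Vfree \<Longrightarrow> vars (rf j) \<subseteq> {..<n}"
    and E_delta: "\<And>s u. (s, u) \<in> E \<Longrightarrow> derives {delta} (Iff (subst qf s) (subst qf u))"
    and rf_delta: "\<And>j. j \<in> Vfree \<Longrightarrow> derives {delta} (Iff (subst qf (rf j)) (Var j))"
    and conseq: "\<And>P Q (M :: nat malg) b. vars P \<subseteq> {..<n} \<Longrightarrow> vars Q \<subseteq> {..<n} \<Longrightarrow>
      derives {delta} (Iff (subst qf P) (subst qf Q)) \<Longrightarrow> in_VL L M \<Longrightarrow> assign M b \<Longrightarrow>
      \<forall>(s, u)\<in>E. eval M b s = eval M b u \<Longrightarrow> eval M b P = eval M b Q"
    by (rule A.coherent_presentation[OF assms(1) _ _ Vfree_less_NN]) (use vars_delta in auto)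
  have vars_qf: "vars (subst qf r) \<subseteq> Vfree" for r
    unfolding vars_subst using qf by blast
  let ?\<Phi> = "(\<lambda>(s, u). Iff (subst qf s) (subst qf u)) ` E \<union>
    (\<lambda>j. Iff (subst qf (rf j)) (Var j)) ` Vfree"
  have "\<exists>K. derives (Excl K) \<phi>" if "\<phi> \<in> ?\<Phi>" for \<phi>
  proof -
    from that consider (E) s u where "(s, u) \<in> E" "\<phi> = Iff (subst qf s) (subst qf u)"
      | (V) j where "j \<in> Vfree" "\<phi> = Iff (subst qf (rf j)) (Var j)"
      by auto
    then show ?thesis
    proof cases
      case E
      then show ?thesis using delta_compact[OF assms(2,3) vars_qf vars_qf E_delta] by simp
    next
      case V
      then have "vars (Var j) \<subseteq> Vfree" by simp
      then show ?thesis using delta_compact[OF assms(2,3) vars_qf _ rf_delta] V by simp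
    qed
  qed
  moreover have "finite ?\<Phi>"
    using E unfolding Vfree_def by simp
  ultimately obtain K where K: "\<forall>\<phi>\<in>?\<Phi>. derives (Excl K) \<phi>"
    using Excl_uniform_bound[of ?\<Phi>] by blast
  show ?thesis
  proof (rule that[OF qf rf _ rf_delta _ conseq])
    show "derives (Excl K) (Iff (subst qf s) (subst qf u))" if "(s, u) \<in> E" for s u
      using K that by force
    show "derives (Excl K) (Iff (subst qf (rf j)) (Var j))" if "j \<in> Vfree" for j
      using K that by blast
  qed
qed

lemma delta_uniformly_compact:
  assumes "coherent L" and "countably_canonical L" and "stable t"
  shows "\<exists>K. \<forall>p q. vars p \<subseteq> Vfree \<longrightarrow> vars q \<subseteq> Vfree \<longrightarrow>
    derives {delta} (Iff p q) \<longrightarrow> derives (Excl K) (Iff p q)"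
proof -
  obtain qf rf n E K where qf: "\<And>i. vars (qf i) \<subseteq> Vfree"
    and rf: "\<And>j. j \<in> Vfree \<Longrightarrow> vars (rf j) \<subseteq> {..<n}"
    and E_K: "\<And>s u. (s, u) \<in> E \<Longrightarrow> derives (Excl K) (Iff (subst qf s) (subst qf u))"
    and rf_delta: "\<And>j. j \<in> Vfree \<Longrightarrow> derives {delta} (Iff (subst qf (rf j)) (Var j))"
    and rf_K: "\<And>j. j \<in> Vfree \<Longrightarrow> derives (Excl K) (Iff (subst qf (rf j)) (Var j))"
    and conseq: "\<And>P Q (M :: nat malg) b. vars P \<subseteq> {..<n} \<Longrightarrow> vars Q \<subseteq> {..<n} \<Longrightarrow>
      derives {delta} (Iff (subst qf P) (subst qf Q)) \<Longrightarrow> in_VL L M \<Longrightarrow> assign M b \<Longrightarrow>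
      \<forall>(s, u)\<in>E. eval M b s = eval M b u \<Longrightarrow> eval M b P = eval M b Q"
    by (rule delta_bounded_presentation[OF assms]) blast
  interpret A: lindenbaum L NN "{delta}" ..
  interpret D: lindenbaum L NN "Excl K" ..
  let ?b = "\<lambda>i. D.cls (qf i)"
  have qf_NN: "\<forall>i. vars (qf i) \<subseteq> {..<NN}"
    using qf Vfree_less_NN by blast
  then have b: "assign D.LA ?b"
    unfolding assign_def by (auto intro: D.cls_in_LA)
  have eval_b: "eval D.LA ?b r = D.cls (subst qf r)" for r
    using qf_NN by (rule D.eval_LA_cls)
  have E_b: "\<forall>(s, u)\<in>E. eval D.LA ?b s = eval D.LA ?b u"
    using E_K D.cls_eq unfolding eval_b D.eqv_def by auto
  define rf' where "rf' j = (if j \<in> Vfree then rf j else Bot)" for j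
  have vars_rf': "vars (subst rf' r) \<subseteq> {..<n}" for r
    unfolding vars_subst rf'_def using rf by (fastforce split: if_split_asm)
  have "derives (Excl K) (Iff p q)"
    if p: "vars p \<subseteq> Vfree" and q: "vars q \<subseteq> Vfree" and pq: "derives {delta} (Iff p q)" for p q
  proof -
    have A_rf': "A.eqv (subst qf (subst rf' r)) r" if "vars r \<subseteq> Vfree" for r
      unfolding subst_subst by (rule A.eqv_subst_Var) (use that rf_delta in \<open>auto simp: rf'_def\<close>)
    have D_rf': "D.eqv (subst qf (subst rf' r)) r" if "vars r \<subseteq> Vfree" for r
      unfolding subst_subst by (rule D.eqv_subst_Var) (use that rf_K in \<open>auto simp: rf'_def\<close>)
    have "A.eqv p q" using pq unfolding A.eqv_def .
    then have "A.eqv (subst qf (subst rf' p)) (subst qf (subst rf' q))"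
      by (rule A.eqv_trans[OF A_rf'[OF p] A.eqv_trans[OF _ A.eqv_sym[OF A_rf'[OF q]]]])
    then have "eval D.LA ?b (subst rf' p) = eval D.LA ?b (subst rf' q)"
      unfolding A.eqv_def by (rule conseq[OF vars_rf' vars_rf' _ D.in_VL_LA b E_b])
    moreover have "D.cls (subst qf (subst rf' p)) = D.cls p" "D.cls (subst qf (subst rf' q)) = D.cls q"
      using D_rf'[OF p] D_rf'[OF q] D.eqv_cls by blast+
    ultimately show ?thesis
      using D.cls_eq unfolding eval_b D.eqv_def by simp
  qed
  then show ?thesis by blast
qed

lemma subst_fresh_w_I: "subst (Var(w := p)) (I k) = I k"
proof -
  have "subst (Var(w := p)) (I k) = subst Var (I k)"
    by (rule subst_cong) (use fresh_w_y(1) in auto)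
  then show ?thesis by (simp add: subst_Var)
qed

theorem iterates_stabilize:
  assumes "coherent L" and "countably_canonical L" and "stable t" and "pos_only x t"
  shows "\<exists>n. Iff (I n) (I (Suc n)) \<in> L"
proof -
  obtain K where K: "\<forall>p q. vars p \<subseteq> Vfree \<longrightarrow> vars q \<subseteq> Vfree \<longrightarrow>
      derives {delta} (Iff p q) \<longrightarrow> derives (Excl K) (Iff p q)"
    using delta_uniformly_compact[OF assms(1-3)] by blast
  have "derives {delta} (Iff (And (Var w) (I (Suc K))) Bot)"
    by (rule derives_by_pval2[OF delta_I_below_Neg_y[OF assms(4), of "Suc K"]
          derives_hyp[OF singletonI]])
      (unfold delta_def pval_Imp pval_Iff pval.simps, blast)
  then have "derives (Excl K) (Iff (And (Var w) (I (Suc K))) Bot)"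
    using K[rule_format, of "And (Var w) (I (Suc K))" Bot] vars_I_Vfree[of "Suc K"] x_w_Vfree(2)
    by (simp del: iter.simps)
  moreover have "subst (Var(w := Neg (I K))) (Neg (And (Var w) (I k))) \<in> L" if "k \<le> K" for k
  proof -
    have "Neg (And (Neg (I K)) (I k)) \<in> L"
      by (rule mem_by_pval1[OF I_mono[OF that]]) (unfold pval_Imp pval.simps, blast)
    then show ?thesis by (simp add: subst_fresh_w_I)
  qed
  ultimately have "subst (Var(w := Neg (I K))) (Iff (And (Var w) (I (Suc K))) Bot) \<in> L"
    using derives_subst_mem unfolding Excl_def by blast
  then have "Iff (And (Neg (I K)) (I (Suc K))) Bot \<in> L"
    by (simp only: subst_Iff subst.simps subst_fresh_w_I fun_upd_same)
  then have "Iff (I K) (I (Suc K)) \<in> L"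
    by (rule mem_by_pval1) (unfold I_Suc pval_Iff pval.simps, blast)
  then show ?thesis by blast
qed

end

theorem corollary4p7:
  assumes "normal_logic L"
    and "coherent L"
    and "countably_canonical L"
    and "stable t"
    and "pos_only x t"
  shows "\<exists>n. Iff (iter x (tplus x t) n) (iter x (tplus x t) (Suc n)) \<in> L"
proof -
  interpret iteration L x t
    by unfold_locales (rule assms(1))
  show ?thesis
    using iterates_stabilize[OF assms(2-5)] .
qed

end
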